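(* Let $\Delta>0$, $\gamma\in\mathbb{R}$, $\lambda>0$, let $\nu$ be any finite measure on $\mathbb{R}$ with $\nu(\mathbb{R})=\lambda$, let $\varphi(u)=\exp(\Delta(i\gamma u+\mathcal{F}\nu(u)-\lambda))$, and let $K$ be a kernel function with $K,\mathcal{F}K\in L^1(\mathbb{R})$. Then for every fixed $h>0$, $$\mathcal{F}^{-1}[\varphi^{-1}(-\cdot)\mathcal{F}K_h](x)=\big(\mathcal{F}^{-1}[\varphi^{-1}(-\cdot)]*K_h\big)(x)\quad\text{for all }x\in\mathbb{R},$$ and consequently, if moreover $K,g\in L^2(\mathbb{R})$, $$\mathcal{F}^{-1}[\mathcal{F}g\,\varphi^{-1}(-\cdot)\mathcal{F}K_h](x)=\big(g*K_h*\mathcal{F}^{-1}[\varphi^{-1}(-\cdot)]\big)(x)\quad\text{for all }x\in\mathbb{R}.$$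
   Context: $\mathcal{F}\mu(u)=\int e^{iux}\mu(dx)$ (finite measures, $L^1$ and, via Plancherel, $L^2$ functions); $\mathcal{F}^{-1}$ is the inverse transform, $\mathcal{F}^{-1}g(x)=(2\pi)^{-1}\int e^{-iux}g(u)du$ for integrable $g$. $\varphi^{-1}=1/\varphi$. $\mathcal{F}^{-1}[\varphi^{-1}(-\cdot)]$ denotes the finite signed measure $e^{\lambda\Delta}\delta_{\gamma\Delta}*\sum_{k\ge0}\bar\nu^{*k}(-\Delta)^k/k!$, where $\bar\nu(A)=\nu(-A)$ and $\bar\nu^{*0}=\delta_0$. $K_h=h^{-1}K(\cdot/h)$; convolution of a function with a finite signed measure is $f*\mu(x)=\int f(x-y)\mu(dy)$. *)

theory Defs
  imports "HOL-Probability.Probability"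
begin

definition FT :: "(real \<Rightarrow> real) \<Rightarrow> real \<Rightarrow> complex" where
  "FT f u = (CLINT x|lborel. iexp (u * x) * complex_of_real (f x))"

definition iFT :: "(real \<Rightarrow> complex) \<Rightarrow> real \<Rightarrow> complex" where
  "iFT G x = complex_of_real (1 / (2 * pi)) * (CLINT u|lborel. iexp (- (u * x)) * G u)"

definition plancherel_FT :: "(real \<Rightarrow> real) \<Rightarrow> (real \<Rightarrow> complex) \<Rightarrow> bool" where
  "plancherel_FT g G \<longleftrightarrow>
     G \<in> borel_measurable borel \<and> integrable lborel (\<lambda>u. (cmod (G u))\<^sup>2) \<and>
     ((\<lambda>n::nat. LINT u|lborel.
         (cmod (G u - FT (\<lambda>x. indicator {- real n..real n} x * g x) u))\<^sup>2) \<longlonglongrightarrow> 0)"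

definition phi :: "real \<Rightarrow> real \<Rightarrow> real \<Rightarrow> real measure \<Rightarrow> real \<Rightarrow> complex" where
  "phi \<Delta> \<gamma> lam \<nu> u =
     exp (complex_of_real \<Delta> * (\<i> * complex_of_real (\<gamma> * u) + char \<nu> u - complex_of_real lam))"

definition Kh :: "(real \<Rightarrow> real) \<Rightarrow> real \<Rightarrow> real \<Rightarrow> real" where
  "Kh K h x = K (x / h) / h"

definition refl_meas :: "real measure \<Rightarrow> real measure" where
  "refl_meas \<nu> = distr \<nu> borel uminus"

primrec conv_pow :: "real measure \<Rightarrow> nat \<Rightarrow> real measure" where
  "conv_pow N 0 = return borel 0"
| "conv_pow N (Suc k) = convolution N (conv_pow N k)"

text \<open>Convolution f * mu of a function with the finite signed measure
  mu = F^{-1}[phi^{-1}(-.)] = e^{lambda Delta} delta_{gamma Delta} * sum_k nu_bar^{*k} (-Delta)^k / k!,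
  i.e. (f * mu)(x) = int f(x - y) mu(dy).\<close>
definition conv_inv_meas ::
  "(real \<Rightarrow> complex) \<Rightarrow> real \<Rightarrow> real \<Rightarrow> real \<Rightarrow> real measure \<Rightarrow> real \<Rightarrow> complex" where
  "conv_inv_meas f \<Delta> \<gamma> lam \<nu> x =
     complex_of_real (exp (lam * \<Delta>)) *
     (\<Sum>k. complex_of_real ((- \<Delta>) ^ k / fact k) *
        (CLINT y|conv_pow (refl_meas \<nu>) k. f (x - \<gamma> * \<Delta> - y)))"

definition fconv :: "(real \<Rightarrow> real) \<Rightarrow> (real \<Rightarrow> real) \<Rightarrow> real \<Rightarrow> real" where
  "fconv f k x = (LINT y|lborel. f (x - y) * k y)"

end

theory Submission
  imports Defs
begin

text \<open>
  Since phi^-1(-u) = e^(lam Delta) e^(i gamma Delta u) exp(-Delta F(nubar)(u)), expanding the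
  exponential writes phi^-1(-.) F(K_h) as e^(lam Delta) e^(i gamma Delta u) times the series
  sum_k (-Delta)^k/k! F(nubar^*k) F(K_h), which is dominated by (|Delta| lam)^k/k! |F(K_h)|.
  It can therefore be inverted term by term, and by Fubini and Fourier inversion every term
  is F^-1[F(mu) F(K_h)] = K_h * mu.

  For the second, psi = phi^-1(-.) F(K_h) lies in L^1 and L^2, and the truncations
  g_n = g 1_[-n,n] are integrable, so F^-1[F(g_n) psi] = g_n * F^-1(psi) by Fubini. As n grows,
  the left side tends to F^-1[G psi] because F(g_n) -> G in L^2, and the right side tends to
  g * F^-1(psi) by dominated convergence. The last convolution is evaluated by integrating the
  series against g term by term, using g * (K_h * mu) = (g * K_h) * mu.

  Fourier inversion, and the square integrability of F(f) for f in L^1 and L^2, are both proved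
  by regularising with the Gaussian e^(-(u/a)^2/2), whose inverse transform is the approximate
  identity gauss_kernel a.
\<close>

section \<open>Gaussian approximate identity\<close>

lemma abs_mult_le_half_squares: "\<bar>x * y\<bar> \<le> x\<^sup>2 / 2 + y\<^sup>2 / (2::real)"
  using sum_squares_bound[of "\<bar>x\<bar>" "\<bar>y\<bar>"] by (simp add: abs_mult)

definition gauss_kernel :: "real \<Rightarrow> real \<Rightarrow> real" where
  "gauss_kernel a t = a * std_normal_density (a * t)"

lemma gauss_kernel_nonneg: "a \<ge> 0 \<Longrightarrow> gauss_kernel a t \<ge> 0"
  by (simp add: gauss_kernel_def normal_density_nonneg)

lemma gauss_kernel_le: assumes "a \<ge> 0" shows "gauss_kernel a t \<le> a"
proof -
  have "std_normal_density (a * t) \<le> 1"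
    unfolding std_normal_density_def using pi_gt3 by (intro mult_le_one) (auto simp: divide_simps)
  then show ?thesis using assms by (simp add: gauss_kernel_def mult_left_le)
qed

lemma gauss_kernel_minus: "gauss_kernel a (- t) = gauss_kernel a t"
  by (simp add: gauss_kernel_def std_normal_density_def)

lemma gauss_kernel_tail:
  assumes a: "a \<ge> 1" and t: "\<bar>t\<bar> > 1"
  shows "gauss_kernel a t \<le> 2 / (a * t\<^sup>2)"
proof -
  define s where "s = (a * t)\<^sup>2 / 2"
  have s: "s > 0" using a t by (auto simp: s_def)
  have "a * (1 + s) \<le> a * exp s"
    using a by (intro mult_left_mono) auto
  then have "a * exp (- s) \<le> a / (1 + s)"
    using s by (simp add: exp_minus field_simps)
  also have "\<dots> \<le> a / s"
    using a s by (intro divide_left_mono) auto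
  also have "\<dots> = 2 / (a * t\<^sup>2)"
    using a s by (simp add: s_def power_mult_distrib power2_eq_square field_simps)
  finally have "a * exp (- s) \<le> 2 / (a * t\<^sup>2)" .
  moreover have "gauss_kernel a t = (a * exp (- s)) / sqrt (2 * pi)"
    by (simp add: gauss_kernel_def std_normal_density_def s_def)
  moreover have "(a * exp (- s)) / sqrt (2 * pi) \<le> a * exp (- s)"
  proof -
    have "1 \<le> sqrt (2 * pi)" using pi_gt3 by simp
    then show ?thesis using a frac_le[of "a * exp (- s)" "a * exp (- s)" 1] by simp
  qed
  ultimately show ?thesis by linarith
qed

lemma
  fixes a :: real assumes "a > 0"
  shows integrable_gauss_kernel_shift: "integrable lborel (\<lambda>z. gauss_kernel a (z - y))"
    and integral_gauss_kernel_shift: "(\<integral>z. gauss_kernel a (z - y) \<partial>lborel) = 1"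
proof -
  have eq: "gauss_kernel a (z - y) = a * std_normal_density (- (a * y) + a * z)" for z
    by (simp add: gauss_kernel_def algebra_simps)
  have int: "integrable lborel std_normal_density"
    using integrable_std_normal_moment[of 0] by simp
  show "integrable lborel (\<lambda>z. gauss_kernel a (z - y))"
    unfolding eq using assms by (intro integrable_mult_right lborel_integrable_real_affine int) auto
  have "(\<integral>z. std_normal_density z \<partial>lborel) = \<bar>a\<bar> *\<^sub>R (\<integral>z. std_normal_density (- (a * y) + a * z) \<partial>lborel)"
    using assms by (intro lborel_integral_real_affine) auto
  moreover have "(\<integral>z. std_normal_density z \<partial>lborel) = 1"
    using integral_std_normal_moment_even[of 0] by simp
  ultimately show "(\<integral>z. gauss_kernel a (z - y) \<partial>lborel) = 1"
    unfolding eq using assms by simp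
qed

lemma integrable_gaussian:
  fixes a :: real assumes "a > 0"
  shows "integrable lborel (\<lambda>u. exp (- ((u / a)\<^sup>2) / 2))"
proof -
  have "integrable lborel (\<lambda>u. (a * sqrt (2 * pi)) * gauss_kernel (1 / a) (u - 0))"
    using assms by (intro integrable_mult_right integrable_gauss_kernel_shift) auto
  then show ?thesis
    using assms by (simp add: gauss_kernel_def std_normal_density_def)
qed

lemma integral_iexp_gaussian:
  assumes a: "a > 0"
  shows "(\<integral>u. iexp (u * t) * complex_of_real (exp (- ((u / a)\<^sup>2) / 2)) \<partial>lborel)
       = complex_of_real (2 * pi * gauss_kernel a t)"
proof -
  have "(\<integral>u. iexp (u * t) * complex_of_real (exp (- ((u / a)\<^sup>2) / 2)) \<partial>lborel)
      = \<bar>a\<bar> *\<^sub>R (\<integral>x. iexp ((0 + a * x) * t) * complex_of_real (exp (- (((0 + a * x) / a)\<^sup>2) / 2)) \<partial>lborel)"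
    using a by (intro lborel_integral_real_affine) auto
  also have "\<dots> = a *\<^sub>R (\<integral>x. iexp ((a * t) * x) * complex_of_real (exp (- (x\<^sup>2) / 2)) \<partial>lborel)"
    using a by (simp add: mult_ac)
  also have "(\<integral>x. iexp ((a * t) * x) * complex_of_real (exp (- (x\<^sup>2) / 2)) \<partial>lborel)
      = sqrt (2 * pi) *\<^sub>R char std_normal_distribution (a * t)"
    unfolding char_def
    by (subst integral_density) (auto simp: normal_density_nonneg std_normal_density_def scaleR_conv_of_real mult_ac)
  also have "char std_normal_distribution (a * t) = complex_of_real (exp (- ((a * t)\<^sup>2) / 2))"
    by (simp add: char_std_normal_distribution)
  moreover have "a * (sqrt (2 * pi) * exp (- ((a * t)\<^sup>2) / 2)) = 2 * pi * gauss_kernel a t"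
  proof -
    have "sqrt (2 * pi) * sqrt (2 * pi) = 2 * pi" by simp
    then show ?thesis by (simp add: gauss_kernel_def std_normal_density_def field_simps)
  qed
  ultimately show ?thesis
    by (simp add: scaleR_conv_of_real flip: of_real_mult)
qed

lemma gaussian_tendsto_1:
  fixes a :: "nat \<Rightarrow> real"
  assumes "filterlim a at_top sequentially"
  shows "(\<lambda>n. exp (- ((u / a n)\<^sup>2) / 2)) \<longlonglongrightarrow> 1"
proof -
  have "(\<lambda>n. u / a n) \<longlonglongrightarrow> 0"
    by (intro tendsto_divide_0[OF tendsto_const] filterlim_at_top_imp_at_infinity assms)
  then show ?thesis
    using tendsto_exp[OF tendsto_divide[OF tendsto_minus[OF tendsto_power[of _ 0 _ 2]] tendsto_const[of 2]]]
    by simp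
qed

lemma gauss_kernel_local_tendsto:
  fixes f :: "real \<Rightarrow> real" and a :: "nat \<Rightarrow> real"
  assumes [measurable]: "f \<in> borel_measurable borel" and cont: "isCont f x"
    and M: "\<And>y. y \<in> {x - 1..x + 1} \<Longrightarrow> \<bar>f y\<bar> \<le> M"
    and a1: "\<And>n. a n \<ge> 1" and a_lim: "filterlim a at_top sequentially"
  shows "(\<lambda>n. \<integral>y. indicator {x - 1..x + 1} y * f y * gauss_kernel (a n) (y - x) \<partial>lborel) \<longlonglongrightarrow> f x"
proof -
  define I where "I = {x - 1..x + 1}"
  have [measurable]: "I \<in> sets borel" by (simp add: I_def)
  have M0: "M \<ge> 0" using M[of x] by simp
  have inv_a: "(\<lambda>n. s / a n) \<longlonglongrightarrow> 0" for s
    by (intro tendsto_divide_0[OF tendsto_const] filterlim_at_top_imp_at_infinity a_lim)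
  have subst: "(\<integral>y. indicator I y * f y * gauss_kernel (a n) (y - x) \<partial>lborel)
      = (\<integral>s. indicator I (x + s / a n) * f (x + s / a n) * std_normal_density s \<partial>lborel)" for n
  proof -
    have an: "a n > 0" using a1[of n] by simp
    have "(\<integral>y. indicator I y * f y * gauss_kernel (a n) (y - x) \<partial>lborel)
        = \<bar>1 / a n\<bar> *\<^sub>R (\<integral>s. indicator I (x + 1 / a n * s) * f (x + 1 / a n * s)
            * gauss_kernel (a n) (x + 1 / a n * s - x) \<partial>lborel)"
      using an by (intro lborel_integral_real_affine) auto
    then show ?thesis
      using an by (simp add: gauss_kernel_def mult_ac)
  qed
  have "(\<lambda>n. \<integral>s. indicator I (x + s / a n) * f (x + s / a n) * std_normal_density s \<partial>lborel)
      \<longlonglongrightarrow> (\<integral>s. f x * std_normal_density s \<partial>lborel)"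
  proof (rule integral_dominated_convergence[where w="\<lambda>s. M * std_normal_density s"])
    show "integrable lborel (\<lambda>s. M * std_normal_density s)"
      using integrable_std_normal_moment[of 0] by simp
    show "AE s in lborel. norm (indicator I (x + s / a n) * f (x + s / a n) * std_normal_density s)
        \<le> M * std_normal_density s" for n
      using M M0 by (intro AE_I2) (auto simp: I_def abs_mult normal_density_nonneg
          indicator_def intro!: mult_right_mono)
    show "AE s in lborel. (\<lambda>n. indicator I (x + s / a n) * f (x + s / a n) * std_normal_density s)
        \<longlonglongrightarrow> f x * std_normal_density s"
    proof (intro AE_I2 tendsto_mult tendsto_const)
      fix s
      have "eventually (\<lambda>n. dist (s / a n) 0 < 1) sequentially"
        using inv_a by (rule tendstoD) simp
      then have "eventually (\<lambda>n. f (x + s / a n) = indicator I (x + s / a n) * f (x + s / a n)) sequentially"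
        by eventually_elim (auto simp: I_def dist_real_def abs_less_iff simp flip: abs_divide)
      moreover have "(\<lambda>n. f (x + s / a n)) \<longlonglongrightarrow> f x"
        using tendsto_add[OF tendsto_const inv_a, of x s] by (intro isCont_tendsto_compose[OF cont]) simp
      ultimately show "(\<lambda>n. indicator I (x + s / a n) * f (x + s / a n)) \<longlonglongrightarrow> f x"
        by (rule Lim_transform_eventually[rotated])
    qed
  qed measurable
  moreover have "(\<integral>s. f x * std_normal_density s \<partial>lborel) = f x"
    using integral_std_normal_moment_even[of 0] by simp
  ultimately show ?thesis unfolding I_def[symmetric] subst by simp
qed

lemma gauss_kernel_tail_tendsto_0:
  fixes f :: "real \<Rightarrow> real" and a :: "nat \<Rightarrow> real"
  assumes [measurable]: "f \<in> borel_measurable borel" and int: "integrable lborel f"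
    and a1: "\<And>n. a n \<ge> 1" and a_lim: "filterlim a at_top sequentially"
  shows "(\<lambda>n. \<integral>y. indicator (- {x - 1..x + 1}) y * f y * gauss_kernel (a n) (y - x) \<partial>lborel) \<longlonglongrightarrow> 0"
proof -
  define I where "I = {x - 1..x + 1}"
  have [measurable]: "I \<in> sets borel" by (simp add: I_def)
  define k where "k n y = gauss_kernel (a n) (y - x)" for n y
  have [measurable]: "k n \<in> borel_measurable borel" for n
    unfolding k_def gauss_kernel_def by measurable
  have k0: "k n y \<ge> 0" for n y using a1[of n] by (simp add: k_def gauss_kernel_nonneg)
  have tail: "k n y \<le> 2 / (a n * (y - x)\<^sup>2)" "k n y \<le> 2" if "y \<notin> I" for n y
  proof -
    have t: "\<bar>y - x\<bar> > 1" using that by (auto simp: I_def)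
    show "k n y \<le> 2 / (a n * (y - x)\<^sup>2)"
      unfolding k_def using gauss_kernel_tail[OF a1 t] .
    have "1 \<le> a n * (y - x)\<^sup>2"
      using a1[of n] one_le_power[of "\<bar>y - x\<bar>" 2] t mult_mono[of 1 "a n" 1 "(y - x)\<^sup>2"] by simp
    then show "k n y \<le> 2"
      using \<open>k n y \<le> 2 / (a n * (y - x)\<^sup>2)\<close> frac_le[of 2 2 1 "a n * (y - x)\<^sup>2"] by simp
  qed
  have "(\<lambda>n. \<integral>y. indicator (- I) y * f y * k n y \<partial>lborel) \<longlonglongrightarrow> (\<integral>(y::real). 0 \<partial>lborel)"
  proof (rule integral_dominated_convergence[where w="\<lambda>y. 2 * \<bar>f y\<bar>" and f="\<lambda>y. 0::real"])
    show "integrable lborel (\<lambda>y. 2 * \<bar>f y\<bar>)" using int by simp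
    show "AE y in lborel. norm (indicator (- I) y * f y * k n y) \<le> 2 * \<bar>f y\<bar>" for n
      using tail(2) k0 by (intro AE_I2) (auto simp: indicator_def abs_mult mult.commute intro!: mult_left_mono)
    show "AE y in lborel. (\<lambda>n. indicator (- I) y * f y * k n y) \<longlonglongrightarrow> 0"
    proof (intro AE_I2)
      fix y
      show "(\<lambda>n. indicator (- I) y * f y * k n y) \<longlonglongrightarrow> 0"
      proof (cases "y \<in> I")
        case False
        have "(\<lambda>n. k n y) \<longlonglongrightarrow> 0"
        proof (rule tendsto_sandwich[of "\<lambda>_. 0" _ _ "\<lambda>n. 2 / (y - x)\<^sup>2 / a n"])
          show "\<forall>\<^sub>F n in sequentially. 0 \<le> k n y" using k0 by simp
          show "\<forall>\<^sub>F n in sequentially. k n y \<le> 2 / (y - x)\<^sup>2 / a n"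
            using tail(1)[OF False] by (simp add: mult.commute)
        qed (rule tendsto_const,
            rule tendsto_divide_0[OF tendsto_const filterlim_at_top_imp_at_infinity[OF a_lim]])
        then show ?thesis by (intro tendsto_mult_right_zero)
      qed simp
    qed
  qed measurable
  then show ?thesis by (simp add: I_def k_def)
qed

lemma gauss_kernel_approx_identity:
  fixes f :: "real \<Rightarrow> real" and a :: "nat \<Rightarrow> real"
  assumes cont: "continuous_on UNIV f" and int: "integrable lborel f"
    and a1: "\<And>n. a n \<ge> 1" and a_lim: "filterlim a at_top sequentially"
  shows "(\<lambda>n. \<integral>y. f y * gauss_kernel (a n) (y - x) \<partial>lborel) \<longlonglongrightarrow> f x"
proof -
  have [measurable]: "f \<in> borel_measurable borel"
    using cont by (rule borel_measurable_continuous_onI)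
  define I where "I = {x - 1..x + 1}"
  obtain M where M: "\<And>y. y \<in> {x - 1..x + 1} \<Longrightarrow> \<bar>f y\<bar> \<le> M"
  proof -
    have "bounded (f ` {x - 1..x + 1})"
      by (intro compact_imp_bounded compact_continuous_image continuous_on_subset[OF cont]) auto
    then have "\<exists>B. \<forall>y\<in>{x - 1..x + 1}. \<bar>f y\<bar> \<le> B"
      unfolding bounded_iff by auto
    then show ?thesis using that by blast
  qed
  have int_fk: "integrable lborel (\<lambda>y. f y * gauss_kernel (a n) (y - x))" for n
  proof (rule Bochner_Integration.integrable_bound)
    show "integrable lborel (\<lambda>y. a n * f y)" using int by simp
    have "\<bar>f y\<bar> * gauss_kernel (a n) (y - x) \<le> \<bar>f y\<bar> * a n" for y
      using a1[of n] gauss_kernel_le[of "a n"] by (intro mult_left_mono) auto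
    then show "AE y in lborel. norm (f y * gauss_kernel (a n) (y - x)) \<le> norm (a n * f y)"
      using a1[of n] gauss_kernel_nonneg[of "a n"] by (intro AE_I2) (simp add: abs_mult mult.commute)
  qed (simp add: gauss_kernel_def)
  have split: "(\<integral>y. f y * gauss_kernel (a n) (y - x) \<partial>lborel)
      = (\<integral>y. indicator I y * f y * gauss_kernel (a n) (y - x) \<partial>lborel)
        + (\<integral>y. indicator (- I) y * f y * gauss_kernel (a n) (y - x) \<partial>lborel)" for n
  proof -
    have "integrable lborel (\<lambda>y. indicator S y * f y * gauss_kernel (a n) (y - x))" if "S \<in> sets borel" for S
      using integrable_mult_indicator[OF _ int_fk, of S n] that by (simp add: mult.assoc)
    then have "(\<integral>y. indicator I y * f y * gauss_kernel (a n) (y - x)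
          + indicator (- I) y * f y * gauss_kernel (a n) (y - x) \<partial>lborel)
        = (\<integral>y. indicator I y * f y * gauss_kernel (a n) (y - x) \<partial>lborel)
          + (\<integral>y. indicator (- I) y * f y * gauss_kernel (a n) (y - x) \<partial>lborel)"
      by (intro Bochner_Integration.integral_add) (auto simp: I_def)
    moreover have "(\<integral>y. f y * gauss_kernel (a n) (y - x) \<partial>lborel)
        = (\<integral>y. indicator I y * f y * gauss_kernel (a n) (y - x)
          + indicator (- I) y * f y * gauss_kernel (a n) (y - x) \<partial>lborel)"
      by (intro Bochner_Integration.integral_cong) (auto simp: indicator_def)
    ultimately show ?thesis by simp
  qed
  have "isCont f x"
    using cont by (simp add: continuous_on_eq_continuous_at)
  from tendsto_add[OF gauss_kernel_local_tendsto[OF _ this M a1 a_lim] gauss_kernel_tail_tendsto_0[OF _ int a1 a_lim]]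
  show ?thesis
    unfolding split I_def by simp
qed

section \<open>Fourier inversion\<close>

lemma (in pair_sigma_finite) integrable_product_bound:
  fixes F :: "'a \<Rightarrow> 'b \<Rightarrow> 'c::{banach, second_countable_topology}"
    and p :: "'a \<Rightarrow> 'd::{banach, second_countable_topology}"
    and q :: "'b \<Rightarrow> 'e::{banach, second_countable_topology}"
  assumes [measurable]: "(\<lambda>(x, y). F x y) \<in> borel_measurable (M1 \<Otimes>\<^sub>M M2)"
    and p: "integrable M1 p" and q: "integrable M2 q"
    and bound: "\<And>x y. norm (F x y) \<le> norm (p x) * norm (q y)"
  shows "integrable (M1 \<Otimes>\<^sub>M M2) (\<lambda>(x, y). F x y)"
proof (rule Fubini_integrable)
  have [measurable]: "p \<in> borel_measurable M1" "q \<in> borel_measurable M2"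
    using p q by (simp_all add: borel_measurable_integrable)
  have int_F: "integrable M2 (F x)" if "x \<in> space M1" for x
    by (rule Bochner_Integration.integrable_bound[of _ "\<lambda>y. norm (p x) * norm (q y)"])
      (use q bound that in \<open>auto intro!: AE_I2\<close>)
  then show "AE x in M1. integrable M2 (\<lambda>y. (\<lambda>(x, y). F x y) (x, y))"
    by (simp add: AE_I2)
  have norm_F: "(\<integral>y. norm (F x y) \<partial>M2) \<le> norm (p x) * (\<integral>y. norm (q y) \<partial>M2)"
    if "x \<in> space M1" for x
    using integral_mono[OF integrable_norm[OF int_F[OF that]] integrable_mult_right[OF integrable_norm[OF q]]] bound
    by simp
  have "integrable M1 (\<lambda>x. \<integral>y. norm (F x y) \<partial>M2)"
  proof (rule Bochner_Integration.integrable_bound[of _ "\<lambda>x. norm (p x) * (\<integral>y. norm (q y) \<partial>M2)"])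
    show "integrable M1 (\<lambda>x. norm (p x) * (\<integral>y. norm (q y) \<partial>M2))"
      using p by (intro integrable_mult_left integrable_norm)
  qed (use norm_F in \<open>auto intro!: AE_I2\<close>)
  then show "integrable M1 (\<lambda>x. \<integral>y. norm ((\<lambda>(x, y). F x y) (x, y)) \<partial>M2)"
    by simp
qed simp

lemma (in pair_sigma_finite) Fubini_product_bound:
  fixes F :: "'a \<Rightarrow> 'b \<Rightarrow> 'c::{banach, second_countable_topology}"
    and p :: "'a \<Rightarrow> 'd::{banach, second_countable_topology}"
    and q :: "'b \<Rightarrow> 'e::{banach, second_countable_topology}"
  assumes "(\<lambda>(x, y). F x y) \<in> borel_measurable (M1 \<Otimes>\<^sub>M M2)"
    and "integrable M1 p" and "integrable M2 q"
    and "\<And>x y. norm (F x y) \<le> norm (p x) * norm (q y)"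
  shows "(\<integral>x. (\<integral>y. F x y \<partial>M2) \<partial>M1) = (\<integral>y. (\<integral>x. F x y \<partial>M1) \<partial>M2)"
  using Fubini_integral[OF integrable_product_bound[OF assms]] by simp

lemma borel_measurable_FT [measurable]:
  "f \<in> borel_measurable borel \<Longrightarrow> FT f \<in> borel_measurable borel"
proof -
  assume [measurable]: "f \<in> borel_measurable borel"
  have "(\<lambda>u. \<integral>x. iexp (u * x) * complex_of_real (f x) \<partial>lborel) \<in> borel_measurable borel"
    by (rule lborel.borel_measurable_lebesgue_integral) measurable
  then show ?thesis unfolding FT_def .
qed

lemma norm_FT_le: "norm (FT f u) \<le> (\<integral>x. \<bar>f x\<bar> \<partial>lborel)"
  unfolding FT_def using integral_norm_bound[of lborel "\<lambda>x. iexp (u * x) * complex_of_real (f x)"]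
  by (simp add: norm_mult)

lemma norm_iFT_le: "norm (iFT \<phi> x) \<le> (\<integral>u. norm (\<phi> u) \<partial>lborel)"
proof -
  have "norm (iFT \<phi> x) = (1 / (2 * pi)) * norm (\<integral>u. iexp (- (u * x)) * \<phi> u \<partial>lborel)"
    unfolding iFT_def norm_mult norm_of_real by (simp add: less_imp_le)
  also have "\<dots> \<le> 1 * (\<integral>u. norm (iexp (- (u * x)) * \<phi> u) \<partial>lborel)"
    using pi_gt3 by (intro mult_mono integral_norm_bound) auto
  finally show ?thesis by (simp add: norm_mult)
qed

lemma iFT_cmult: "iFT (\<lambda>u. c * g u) x = c * iFT g x"
proof -
  have "(\<integral>u. iexp (- (u * x)) * (c * g u) \<partial>lborel) = c * (\<integral>u. iexp (- (u * x)) * g u \<partial>lborel)"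
    by (subst integral_mult_right_zero[symmetric]) (simp add: mult.left_commute)
  then show ?thesis
    unfolding iFT_def by simp
qed

lemma iFT_shift: "iFT (\<lambda>u. iexp (c * u) * g u) x = iFT g (x - c)"
  unfolding iFT_def
  by (intro arg_cong[where f="\<lambda>I. _ * I"] Bochner_Integration.integral_cong refl)
    (simp add: algebra_simps flip: exp_add)

lemma iFT_diff:
  assumes "integrable lborel \<phi>" and "integrable lborel \<psi>"
  shows "iFT (\<lambda>u. \<phi> u - \<psi> u) x = iFT \<phi> x - iFT \<psi> x"
proof -
  have "integrable lborel (\<lambda>u. iexp (- (u * x)) * \<zeta> u)" if "integrable lborel \<zeta>" for \<zeta>
    by (rule Bochner_Integration.integrable_bound[OF that])
      (use that in \<open>auto simp: norm_mult borel_measurable_integrable\<close>)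
  with assms have "integrable lborel (\<lambda>u. iexp (- (u * x)) * \<phi> u)" "integrable lborel (\<lambda>u. iexp (- (u * x)) * \<psi> u)"
    by blast+
  then show ?thesis
    unfolding iFT_def by (simp add: right_diff_distrib)
qed

lemma integral_gaussian_iFT_FT:
  fixes f :: "real \<Rightarrow> real"
  assumes [measurable]: "f \<in> borel_measurable borel" and int: "integrable lborel f" and a: "a > 0"
  shows "(\<integral>u. iexp (- (u * x)) * complex_of_real (exp (- ((u / a)\<^sup>2) / 2)) * FT f u \<partial>lborel)
       = complex_of_real (2 * pi * (\<integral>y. f y * gauss_kernel a (y - x) \<partial>lborel))"
proof -
  define e where "e u = exp (- ((u / a)\<^sup>2) / 2)" for u
  have [measurable]: "e \<in> borel_measurable borel" unfolding e_def by measurable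
  have e_int: "integrable lborel e" unfolding e_def by (rule integrable_gaussian[OF a])
  have e0: "e u \<ge> 0" for u by (simp add: e_def)
  define F where "F u y = iexp (- (u * x)) * complex_of_real (e u) * (iexp (u * y) * complex_of_real (f y))" for u y
  have "(\<integral>u. iexp (- (u * x)) * complex_of_real (e u) * FT f u \<partial>lborel) = (\<integral>u. (\<integral>y. F u y \<partial>lborel) \<partial>lborel)"
    unfolding F_def FT_def by simp
  also have "\<dots> = (\<integral>y. (\<integral>u. F u y \<partial>lborel) \<partial>lborel)"
    using e_int int e0
    by (intro lborel_pair.Fubini_product_bound[where p=e and q=f]) (auto simp: F_def norm_mult)
  also have "\<dots> = (\<integral>y. complex_of_real (2 * pi) * complex_of_real (f y * gauss_kernel a (y - x)) \<partial>lborel)"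
  proof (intro Bochner_Integration.integral_cong refl)
    fix y
    have "F u y = complex_of_real (f y) * (iexp (u * (y - x)) * complex_of_real (e u))" for u
      by (simp add: F_def algebra_simps flip: exp_add)
    then show "(\<integral>u. F u y \<partial>lborel) = complex_of_real (2 * pi) * complex_of_real (f y * gauss_kernel a (y - x))"
      using integral_iexp_gaussian[OF a, of "y - x"] by (simp add: e_def)
  qed
  finally show ?thesis
    by (simp add: e_def flip: integral_complex_of_real)
qed

theorem fourier_inversion:
  fixes f :: "real \<Rightarrow> real"
  assumes cont: "continuous_on UNIV f" and int: "integrable lborel f" and int_FT: "integrable lborel (FT f)"
  shows "iFT (FT f) x = complex_of_real (f x)"
proof -
  define a :: "nat \<Rightarrow> real" where "a n = real (Suc n)" for n
  have a1: "a n \<ge> 1" for n by (simp add: a_def)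
  have a_lim: "filterlim a at_top sequentially"
    unfolding a_def by (rule filterlim_sequentially_Suc[THEN iffD2, OF filterlim_real_sequentially])
  have [measurable]: "f \<in> borel_measurable borel"
    using cont by (rule borel_measurable_continuous_onI)
  define J where "J n = (\<integral>u. iexp (- (u * x)) * complex_of_real (exp (- ((u / a n)\<^sup>2) / 2)) * FT f u \<partial>lborel)" for n
  have "J \<longlonglongrightarrow> (\<integral>u. iexp (- (u * x)) * FT f u \<partial>lborel)"
    unfolding J_def
  proof (rule integral_dominated_convergence[where w="\<lambda>u. norm (FT f u)"])
    show "AE u in lborel. norm (iexp (- (u * x)) * complex_of_real (exp (- ((u / a n)\<^sup>2) / 2)) * FT f u)
        \<le> norm (FT f u)" for n
      by (intro AE_I2) (simp add: norm_mult mult_left_le_one_le)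
    show "AE u in lborel. (\<lambda>n. iexp (- (u * x)) * complex_of_real (exp (- ((u / a n)\<^sup>2) / 2)) * FT f u)
        \<longlonglongrightarrow> iexp (- (u * x)) * FT f u"
    proof (intro AE_I2)
      fix u
      have "(\<lambda>n. complex_of_real (exp (- ((u / a n)\<^sup>2) / 2))) \<longlonglongrightarrow> 1"
        using tendsto_of_real[OF gaussian_tendsto_1[OF a_lim]] by simp
      from tendsto_mult[OF tendsto_mult[OF tendsto_const this] tendsto_const]
      show "(\<lambda>n. iexp (- (u * x)) * complex_of_real (exp (- ((u / a n)\<^sup>2) / 2)) * FT f u)
          \<longlonglongrightarrow> iexp (- (u * x)) * FT f u"
        by simp
    qed
  qed (use int_FT in \<open>simp_all add: borel_measurable_integrable\<close>)
  moreover have "J \<longlonglongrightarrow> complex_of_real (2 * pi * f x)"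
  proof -
    have "J = (\<lambda>n. complex_of_real (2 * pi * (\<integral>y. f y * gauss_kernel (a n) (y - x) \<partial>lborel)))"
      unfolding J_def using a1 by (intro ext integral_gaussian_iFT_FT int) (auto simp: a_def)
    then show ?thesis
      by (simp only:) (intro tendsto_of_real tendsto_mult tendsto_const gauss_kernel_approx_identity cont int a1 a_lim)
  qed
  ultimately have "(\<integral>u. iexp (- (u * x)) * FT f u \<partial>lborel) = complex_of_real (2 * pi * f x)"
    by (rule LIMSEQ_unique)
  then have "iFT (FT f) x = complex_of_real (1 / (2 * pi)) * complex_of_real (2 * pi * f x)"
    unfolding iFT_def by simp
  then show ?thesis by simp
qed

lemma abs_le_integral_norm_FT:
  fixes f :: "real \<Rightarrow> real"
  assumes "continuous_on UNIV f" and "integrable lborel f" and "integrable lborel (FT f)"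
  shows "\<bar>f x\<bar> \<le> (\<integral>u. norm (FT f u) \<partial>lborel)"
  using norm_iFT_le[of "FT f" x] fourier_inversion[OF assms] by simp

lemma iFT_mult_integral_iexp:
  fixes \<psi> :: "real \<Rightarrow> complex" and q :: "real \<Rightarrow> complex"
  assumes "sigma_finite_measure \<mu>" and sets_\<mu> [measurable_cong]: "sets \<mu> = sets borel"
    and int_\<psi>: "integrable lborel \<psi>" and int_q: "integrable \<mu> q"
  shows "iFT (\<lambda>u. \<psi> u * (\<integral>y. iexp (u * y) * q y \<partial>\<mu>)) x = (\<integral>y. q y * iFT \<psi> (x - y) \<partial>\<mu>)"
proof -
  interpret \<mu>: sigma_finite_measure \<mu> by fact
  interpret pair_sigma_finite lborel \<mu> ..
  have [measurable]: "\<psi> \<in> borel_measurable borel" "q \<in> borel_measurable borel"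
    using int_\<psi> int_q by (auto simp: borel_measurable_integrable)
  define F where "F u y = iexp (- (u * x)) * \<psi> u * (iexp (u * y) * q y)" for u y
  have "(\<integral>u. iexp (- (u * x)) * (\<psi> u * (\<integral>y. iexp (u * y) * q y \<partial>\<mu>)) \<partial>lborel)
      = (\<integral>u. (\<integral>y. F u y \<partial>\<mu>) \<partial>lborel)"
    unfolding F_def by (simp add: mult.assoc)
  also have "\<dots> = (\<integral>y. (\<integral>u. F u y \<partial>lborel) \<partial>\<mu>)"
    using int_\<psi> int_q by (intro Fubini_product_bound[where p=\<psi> and q=q]) (auto simp: F_def norm_mult)
  also have "\<dots> = (\<integral>y. q y * (\<integral>u. iexp (- (u * (x - y))) * \<psi> u \<partial>lborel) \<partial>\<mu>)"
    by (intro Bochner_Integration.integral_cong refl)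
      (simp add: F_def algebra_simps flip: exp_add integral_mult_right_zero)
  finally show ?thesis
    unfolding iFT_def by (simp add: mult.left_commute[of "complex_of_real (inverse pi)"])
qed

lemma iFT_char_mult_FT:
  fixes f :: "real \<Rightarrow> real"
  assumes "finite_measure \<rho>" and "sets \<rho> = sets borel"
    and cont: "continuous_on UNIV f" and int: "integrable lborel f" and int_FT: "integrable lborel (FT f)"
  shows "iFT (\<lambda>u. char \<rho> u * FT f u) x = (\<integral>y. complex_of_real (f (x - y)) \<partial>\<rho>)"
proof -
  interpret finite_measure \<rho> by fact
  have "iFT (\<lambda>u. FT f u * (\<integral>y. iexp (u * y) * 1 \<partial>\<rho>)) x = (\<integral>y. 1 * iFT (FT f) (x - y) \<partial>\<rho>)"
    using assms by (intro iFT_mult_integral_iexp) (auto intro: sigma_finite_measure)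
  then show ?thesis
    by (simp add: char_def mult.commute fourier_inversion[OF cont int int_FT])
qed

lemma iFT_FT_mult:
  fixes r :: "real \<Rightarrow> real" and \<psi> :: "real \<Rightarrow> complex"
  assumes "integrable lborel r" and "integrable lborel \<psi>"
  shows "iFT (\<lambda>u. FT r u * \<psi> u) x = (\<integral>y. complex_of_real (r y) * iFT \<psi> (x - y) \<partial>lborel)"
  using iFT_mult_integral_iexp[of lborel \<psi> "\<lambda>y. complex_of_real (r y)" x] assms
  by (simp add: FT_def mult.commute lborel.sigma_finite_measure_axioms)

lemma iFT_sums:
  fixes \<psi> :: "nat \<Rightarrow> real \<Rightarrow> complex" and w :: "real \<Rightarrow> 'a::{banach, second_countable_topology}"
  assumes int: "\<And>k. integrable lborel (\<psi> k)" and int_w: "integrable lborel w"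
    and bound: "\<And>k u. norm (\<psi> k u) \<le> b k * norm (w u)" and b: "summable b"
  shows "(\<lambda>k. iFT (\<psi> k) x) sums iFT (\<lambda>u. \<Sum>k. \<psi> k u) x"
proof -
  have [measurable]: "\<psi> k \<in> borel_measurable borel" for k
    using int[of k] by (simp add: borel_measurable_integrable)
  define \<eta> where "\<eta> k u = iexp (- (u * x)) * \<psi> k u" for k u
  have norm_\<eta>: "norm (\<eta> k u) = norm (\<psi> k u)" for k u
    by (simp add: \<eta>_def norm_mult)
  have int_\<eta>: "integrable lborel (\<eta> k)" for k
  proof (rule Bochner_Integration.integrable_bound[OF int[of k]])
    show "\<eta> k \<in> borel_measurable lborel" unfolding \<eta>_def by measurable
  qed (simp add: norm_\<eta>)
  have summable_\<psi>: "summable (\<lambda>k. norm (\<psi> k u))" for u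
    by (rule summable_comparison_test'[OF summable_mult2[OF b, of "norm (w u)"], of 0]) (use bound in simp)
  have int_le: "(\<integral>u. norm (\<eta> k u) \<partial>lborel) \<le> b k * (\<integral>u. norm (w u) \<partial>lborel)" for k
    unfolding norm_\<eta> integral_mult_right_zero[symmetric]
    using int int_w bound by (intro integral_mono) simp_all
  have summable_int: "summable (\<lambda>k. \<integral>u. norm (\<eta> k u) \<partial>lborel)"
  proof (rule summable_comparison_test'[OF summable_mult2[OF b], of 0])
    show "norm (\<integral>u. norm (\<eta> k u) \<partial>lborel) \<le> b k * (\<integral>u. norm (w u) \<partial>lborel)" for k
      using int_le[of k] by (simp add: integral_nonneg_AE)
  qed
  have "AE u in lborel. summable (\<lambda>k. norm (\<eta> k u))"
    by (simp add: norm_\<eta> summable_\<psi>)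
  note sums_integral[OF int_\<eta> this summable_int]
  moreover have "(\<Sum>k. \<eta> k u) = iexp (- (u * x)) * (\<Sum>k. \<psi> k u)" for u
    unfolding \<eta>_def by (rule suminf_mult[OF summable_norm_cancel[OF summable_\<psi>]])
  ultimately have "(\<lambda>k. integral\<^sup>L lborel (\<eta> k)) sums (\<integral>u. iexp (- (u * x)) * (\<Sum>k. \<psi> k u) \<partial>lborel)"
    by (simp only:)
  then show ?thesis
    unfolding iFT_def \<eta>_def by (rule sums_mult)
qed

section \<open>Square integrable functions\<close>

lemma integral_mult_gauss_smoothing_le:
  fixes \<phi> :: "real \<Rightarrow> real"
  assumes a: "a > 0" and [measurable]: "\<phi> \<in> borel_measurable borel"
    and int_sq: "integrable lborel (\<lambda>x. (\<phi> x)\<^sup>2)"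
  shows "(\<integral>y. \<phi> y * (\<integral>z. \<phi> z * gauss_kernel a (z - y) \<partial>lborel) \<partial>lborel) \<le> (\<integral>y. (\<phi> y)\<^sup>2 \<partial>lborel)"
proof -
  define k where "k y z = gauss_kernel a (z - y)" for y z
  have k_swap: "k y z = k z y" for y z
    unfolding k_def using gauss_kernel_minus[of a "y - z"] by simp
  have k0: "k y z \<ge> 0" for y z using a by (simp add: k_def gauss_kernel_nonneg)
  have [measurable]: "(\<lambda>(y, z). k y z) \<in> borel_measurable (lborel \<Otimes>\<^sub>M lborel)"
    unfolding k_def gauss_kernel_def by measurable
  have int_k: "integrable lborel (k y)" "(\<integral>z. k y z \<partial>lborel) = 1" for y
    unfolding k_def using integrable_gauss_kernel_shift[OF a] integral_gauss_kernel_shift[OF a] by auto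
  \<comment> \<open>\<open>|\<phi> y \<phi> z| \<le> (\<phi> y\<^sup>2 + \<phi> z\<^sup>2) / 2\<close>, and each half integrates to half of the right-hand side
    because the kernel has unit mass in either variable.\<close>
  define B where "B = (\<lambda>(y, z). (\<phi> y)\<^sup>2 / 2 * k y z)"
  have [measurable]: "B \<in> borel_measurable (lborel \<Otimes>\<^sub>M lborel)" unfolding B_def by measurable
  have int_B: "integrable (lborel \<Otimes>\<^sub>M lborel) B"
    using int_k k0 int_sq
    by (intro lborel_pair.Fubini_integrable) (auto simp: B_def)
  have int_B': "integrable (lborel \<Otimes>\<^sub>M lborel) (\<lambda>(y, z). B (z, y))"
    using lborel_pair.integrable_product_swap[OF int_B] by simp
  have int_B_B': "(\<integral>p. B p + B (snd p, fst p) \<partial>(lborel \<Otimes>\<^sub>M lborel)) = (\<integral>y. (\<phi> y)\<^sup>2 \<partial>lborel)"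
  proof -
    have "(\<integral>p. B p \<partial>(lborel \<Otimes>\<^sub>M lborel)) = (\<integral>y. (\<phi> y)\<^sup>2 / 2 \<partial>lborel)"
      using lborel_pair.integral_fst'[OF int_B] int_k by (simp add: B_def)
    moreover have "(\<integral>p. B (snd p, fst p) \<partial>(lborel \<Otimes>\<^sub>M lborel)) = (\<integral>p. B p \<partial>(lborel \<Otimes>\<^sub>M lborel))"
      using lborel_pair.integral_product_swap[of B] by (simp add: case_prod_beta')
    ultimately show ?thesis
      using int_B int_B' by (simp add: case_prod_beta')
  qed
  define H where "H = (\<lambda>(y, z). \<phi> y * (\<phi> z * k y z))"
  have [measurable]: "H \<in> borel_measurable (lborel \<Otimes>\<^sub>M lborel)" unfolding H_def by measurable
  have H_le: "\<bar>H (y, z)\<bar> \<le> B (y, z) + B (z, y)" for y z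
  proof -
    have "\<bar>\<phi> y * \<phi> z\<bar> * k y z \<le> ((\<phi> y)\<^sup>2 / 2 + (\<phi> z)\<^sup>2 / 2) * k y z"
      using abs_mult_le_half_squares k0 by (intro mult_right_mono) auto
    then show ?thesis
      using k0[of y z] by (simp add: H_def B_def abs_mult k_swap[of z y] algebra_simps)
  qed
  have int_H: "integrable (lborel \<Otimes>\<^sub>M lborel) H"
  proof (rule Bochner_Integration.integrable_bound[of _ "\<lambda>p. B p + B (snd p, fst p)"])
    show "integrable (lborel \<Otimes>\<^sub>M lborel) (\<lambda>p. B p + B (snd p, fst p))"
      using int_B int_B' by (simp add: case_prod_beta')
    show "AE p in lborel \<Otimes>\<^sub>M lborel. norm (H p) \<le> norm (B p + B (snd p, fst p))"
    proof (intro AE_I2)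
      fix p :: "real \<times> real"
      have "B p \<ge> 0" "B (snd p, fst p) \<ge> 0" using k0 by (simp_all add: B_def case_prod_beta')
      then show "norm (H p) \<le> norm (B p + B (snd p, fst p))"
        using H_le[of "fst p" "snd p"] by simp
    qed
  qed measurable
  have "(\<integral>y. \<phi> y * (\<integral>z. \<phi> z * gauss_kernel a (z - y) \<partial>lborel) \<partial>lborel)
      = (\<integral>p. H p \<partial>(lborel \<Otimes>\<^sub>M lborel))"
    using lborel_pair.integral_fst'[OF int_H] by (simp add: H_def k_def)
  also have "\<dots> \<le> (\<integral>p. B p + B (snd p, fst p) \<partial>(lborel \<Otimes>\<^sub>M lborel))"
  proof (rule integral_mono)
    show "integrable (lborel \<Otimes>\<^sub>M lborel) (\<lambda>p. B p + B (snd p, fst p))"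
      using int_B int_B' by (simp add: case_prod_beta')
    show "H p \<le> B p + B (snd p, fst p)" for p
      using H_le[of "fst p" "snd p"] by simp
  qed (rule int_H)
  finally show ?thesis unfolding int_B_B' .
qed

lemma integral_gaussian_mult_norm_FT_sq:
  fixes \<phi> :: "real \<Rightarrow> real"
  assumes a: "a > 0" and [measurable]: "\<phi> \<in> borel_measurable borel" and int: "integrable lborel \<phi>"
  shows "(\<integral>u. exp (- ((u / a)\<^sup>2) / 2) * (cmod (FT \<phi> u))\<^sup>2 \<partial>lborel)
       = 2 * pi * (\<integral>y. \<phi> y * (\<integral>z. \<phi> z * gauss_kernel a (z - y) \<partial>lborel) \<partial>lborel)"
proof -
  define e where "e u = exp (- ((u / a)\<^sup>2) / 2)" for u
  have [measurable]: "e \<in> borel_measurable borel" unfolding e_def by measurable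
  have e0: "e u \<ge> 0" for u by (simp add: e_def)
  have [measurable]: "(\<lambda>u. cnj (FT \<phi> u)) \<in> borel_measurable borel"
    by (intro borel_measurable_continuous_on[OF continuous_on_cnj[OF continuous_on_id]]) measurable
  have int_eFT: "integrable lborel (\<lambda>u. e u * norm (FT \<phi> u))"
  proof (rule Bochner_Integration.integrable_bound)
    show "integrable lborel (\<lambda>u. (\<integral>x. \<bar>\<phi> x\<bar> \<partial>lborel) * e u)"
      unfolding e_def using integrable_gaussian[OF a] by simp
    show "AE u in lborel. norm (e u * norm (FT \<phi> u)) \<le> norm ((\<integral>x. \<bar>\<phi> x\<bar> \<partial>lborel) * e u)"
      using e0 norm_FT_le[of \<phi>] by (intro AE_I2) (simp add: mult.commute mult_left_mono)
  qed measurable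
  have inner: "(\<integral>u. complex_of_real (e u) * cnj (FT \<phi> u) * iexp (u * y) \<partial>lborel)
      = complex_of_real (2 * pi * (\<integral>z. \<phi> z * gauss_kernel a (z - y) \<partial>lborel))" for y
  proof -
    have "(\<integral>u. complex_of_real (e u) * cnj (FT \<phi> u) * iexp (u * y) \<partial>lborel)
        = cnj (\<integral>u. iexp (- (u * y)) * complex_of_real (e u) * FT \<phi> u \<partial>lborel)"
      by (simp flip: Bochner_Integration.integral_cnj add: exp_cnj mult_ac)
    also have "\<dots> = cnj (complex_of_real (2 * pi * (\<integral>z. \<phi> z * gauss_kernel a (z - y) \<partial>lborel)))"
      unfolding e_def by (subst integral_gaussian_iFT_FT[OF _ int a]) simp_all
    finally show ?thesis by simp
  qed
  have "complex_of_real (\<integral>u. e u * (cmod (FT \<phi> u))\<^sup>2 \<partial>lborel)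
      = (\<integral>u. (\<integral>y. complex_of_real (e u) * cnj (FT \<phi> u) * (iexp (u * y) * complex_of_real (\<phi> y)) \<partial>lborel) \<partial>lborel)"
  proof -
    have "complex_of_real (e u * (cmod (FT \<phi> u))\<^sup>2) = complex_of_real (e u) * cnj (FT \<phi> u) * FT \<phi> u" for u
      by (simp add: complex_norm_square mult_ac flip: of_real_power)
    also have "\<dots> u = (\<integral>y. complex_of_real (e u) * cnj (FT \<phi> u) * (iexp (u * y) * complex_of_real (\<phi> y)) \<partial>lborel)" for u
      by (subst (2) FT_def) (rule integral_mult_right_zero[symmetric])
    finally have "complex_of_real (e u * (cmod (FT \<phi> u))\<^sup>2)
        = (\<integral>y. complex_of_real (e u) * cnj (FT \<phi> u) * (iexp (u * y) * complex_of_real (\<phi> y)) \<partial>lborel)" for u .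
    then show ?thesis by (simp only: flip: integral_complex_of_real)
  qed
  also have "\<dots> = (\<integral>y. (\<integral>u. complex_of_real (e u) * cnj (FT \<phi> u) * (iexp (u * y) * complex_of_real (\<phi> y)) \<partial>lborel) \<partial>lborel)"
    using int_eFT int e0
    by (intro lborel_pair.Fubini_product_bound[where p="\<lambda>u. e u * norm (FT \<phi> u)" and q=\<phi>])
      (auto simp: norm_mult)
  also have "\<dots> = (\<integral>y. complex_of_real (2 * pi * (\<phi> y * (\<integral>z. \<phi> z * gauss_kernel a (z - y) \<partial>lborel))) \<partial>lborel)"
  proof (intro Bochner_Integration.integral_cong refl)
    fix y
    have "(\<integral>u. complex_of_real (e u) * cnj (FT \<phi> u) * (iexp (u * y) * complex_of_real (\<phi> y)) \<partial>lborel)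
        = (\<integral>u. complex_of_real (\<phi> y) * (complex_of_real (e u) * cnj (FT \<phi> u) * iexp (u * y)) \<partial>lborel)"
      by (simp add: mult_ac)
    also have "\<dots> = complex_of_real (\<phi> y) * complex_of_real (2 * pi * (\<integral>z. \<phi> z * gauss_kernel a (z - y) \<partial>lborel))"
      by (simp only: integral_mult_right_zero inner)
    finally show "(\<integral>u. complex_of_real (e u) * cnj (FT \<phi> u) * (iexp (u * y) * complex_of_real (\<phi> y)) \<partial>lborel)
        = complex_of_real (2 * pi * (\<phi> y * (\<integral>z. \<phi> z * gauss_kernel a (z - y) \<partial>lborel)))"
      by (simp add: mult_ac)
  qed
  also have "\<dots> = complex_of_real (\<integral>y. 2 * pi * (\<phi> y * (\<integral>z. \<phi> z * gauss_kernel a (z - y) \<partial>lborel)) \<partial>lborel)"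
    by (rule integral_complex_of_real)
  finally show ?thesis
    unfolding e_def of_real_eq_iff by simp
qed

lemma square_integrable_FT:
  fixes \<phi> :: "real \<Rightarrow> real"
  assumes [measurable]: "\<phi> \<in> borel_measurable borel" and int: "integrable lborel \<phi>"
    and int_sq: "integrable lborel (\<lambda>x. (\<phi> x)\<^sup>2)"
  shows "integrable lborel (\<lambda>u. (cmod (FT \<phi> u))\<^sup>2)"
proof -
  define e where "e n u = exp (- ((u / real (Suc n))\<^sup>2) / 2)" for n u
  have [measurable]: "e n \<in> borel_measurable borel" for n unfolding e_def by measurable
  have e0: "e n u \<ge> 0" for n u by (simp add: e_def)
  define C where "C = 2 * pi * (\<integral>y. (\<phi> y)\<^sup>2 \<partial>lborel)"
  define L where "L = (\<integral>x. \<bar>\<phi> x\<bar> \<partial>lborel)"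
  have int_n: "integrable lborel (\<lambda>u. e n u * (cmod (FT \<phi> u))\<^sup>2)" for n
  proof (rule Bochner_Integration.integrable_bound)
    show "integrable lborel (\<lambda>u. L\<^sup>2 * e n u)"
      unfolding e_def by (intro integrable_mult_right integrable_gaussian) simp
    have "(cmod (FT \<phi> u))\<^sup>2 \<le> L\<^sup>2" for u
      unfolding L_def by (intro power_mono norm_FT_le) simp
    then show "AE u in lborel. norm (e n u * (cmod (FT \<phi> u))\<^sup>2) \<le> norm (L\<^sup>2 * e n u)"
      using e0 by (intro AE_I2) (simp add: mult.commute mult_left_mono)
  qed measurable
  have "(\<integral>u. e n u * (cmod (FT \<phi> u))\<^sup>2 \<partial>lborel) \<le> C" for n
  proof -
    have "(\<integral>u. e n u * (cmod (FT \<phi> u))\<^sup>2 \<partial>lborel)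
        = 2 * pi * (\<integral>y. \<phi> y * (\<integral>z. \<phi> z * gauss_kernel (real (Suc n)) (z - y) \<partial>lborel) \<partial>lborel)"
      unfolding e_def by (intro integral_gaussian_mult_norm_FT_sq int) simp_all
    also have "\<dots> \<le> C"
      unfolding C_def by (intro mult_left_mono integral_mult_gauss_smoothing_le int_sq) simp_all
    finally show ?thesis .
  qed
  then have bound: "(\<integral>\<^sup>+u. ennreal (e n u * (cmod (FT \<phi> u))\<^sup>2) \<partial>lborel) \<le> ennreal C" for n
    using nn_integral_eq_integral[OF int_n[of n]] e0 by (simp add: ennreal_leI)
  \<comment> \<open>Fatou's lemma along the Gaussian regularisations.\<close>
  have "(\<lambda>n. ennreal (e n u * (cmod (FT \<phi> u))\<^sup>2)) \<longlonglongrightarrow> ennreal ((cmod (FT \<phi> u))\<^sup>2)" for u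
    using gaussian_tendsto_1[OF filterlim_sequentially_Suc[THEN iffD2, OF filterlim_real_sequentially], of u]
    unfolding e_def by (intro tendsto_ennrealI) (auto intro: tendsto_eq_intros)
  then have "(\<integral>\<^sup>+u. ennreal ((cmod (FT \<phi> u))\<^sup>2) \<partial>lborel)
      = (\<integral>\<^sup>+u. liminf (\<lambda>n. ennreal (e n u * (cmod (FT \<phi> u))\<^sup>2)) \<partial>lborel)"
    by (intro nn_integral_cong) (rule lim_imp_Liminf[symmetric]; simp)
  also have "\<dots> \<le> liminf (\<lambda>n. \<integral>\<^sup>+u. ennreal (e n u * (cmod (FT \<phi> u))\<^sup>2) \<partial>lborel)"
    by (rule nn_integral_liminf) measurable
  also have "\<dots> \<le> ennreal C"
    using bound by (intro order_trans[OF Liminf_le_Limsup Limsup_bounded]) auto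
  finally show ?thesis
    by (intro integrableI_bounded) (auto simp: le_less_trans)
qed

lemma integrable_indicator_mult:
  fixes g :: "real \<Rightarrow> real"
  assumes [measurable]: "g \<in> borel_measurable borel" and "integrable lborel (\<lambda>x. (g x)\<^sup>2)"
  shows "integrable lborel (\<lambda>x. indicator {a..b} x * g x)"
proof (rule Bochner_Integration.integrable_bound)
  show "integrable lborel (\<lambda>x. indicator {a..b} x + (g x)\<^sup>2 :: real)"
    using assms by (intro Bochner_Integration.integrable_add integrable_real_indicator)
      (auto simp: emeasure_lborel_Icc_eq)
  have "\<bar>g x\<bar> \<le> 1 + (g x)\<^sup>2" for x
    using abs_mult_le_half_squares[of 1 "g x"] by simp
  then show "AE x in lborel. norm (indicator {a..b} x * g x) \<le> norm (indicator {a..b} x + (g x)\<^sup>2 :: real)"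
    by (intro AE_I2) (auto simp: indicator_def)
qed measurable

lemma integrable_mult_square_integrable:
  fixes \<phi> \<psi> :: "real \<Rightarrow> complex"
  assumes "integrable lborel (\<lambda>u. (cmod (\<phi> u))\<^sup>2)" and "integrable lborel (\<lambda>u. (cmod (\<psi> u))\<^sup>2)"
    and "\<phi> \<in> borel_measurable borel" and "\<psi> \<in> borel_measurable borel"
  shows "integrable lborel (\<lambda>u. \<phi> u * \<psi> u)"
proof (rule Bochner_Integration.integrable_bound)
  show "integrable lborel (\<lambda>u. (cmod (\<phi> u))\<^sup>2 / 2 + (cmod (\<psi> u))\<^sup>2 / 2)"
    using assms(1,2) by simp
  have "norm (\<phi> u * \<psi> u) \<le> (cmod (\<phi> u))\<^sup>2 / 2 + (cmod (\<psi> u))\<^sup>2 / 2" for u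
    using abs_mult_le_half_squares[of "cmod (\<phi> u)" "cmod (\<psi> u)"] by (simp add: norm_mult)
  then show "AE u in lborel. norm (\<phi> u * \<psi> u) \<le> norm ((cmod (\<phi> u))\<^sup>2 / 2 + (cmod (\<psi> u))\<^sup>2 / 2)"
    by (intro AE_I2) simp
qed (use assms(3,4) in measurable)

lemma square_integrable_diff:
  fixes \<phi> \<psi> :: "real \<Rightarrow> complex"
  assumes "integrable lborel (\<lambda>u. (cmod (\<phi> u))\<^sup>2)" and "integrable lborel (\<lambda>u. (cmod (\<psi> u))\<^sup>2)"
    and "\<phi> \<in> borel_measurable borel" and "\<psi> \<in> borel_measurable borel"
  shows "integrable lborel (\<lambda>u. (cmod (\<phi> u - \<psi> u))\<^sup>2)"
proof (rule Bochner_Integration.integrable_bound)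
  show "integrable lborel (\<lambda>u. 2 * (cmod (\<phi> u))\<^sup>2 + 2 * (cmod (\<psi> u))\<^sup>2)"
    using assms(1,2) by simp
  have "(cmod (a - b))\<^sup>2 \<le> 2 * (cmod a)\<^sup>2 + 2 * (cmod b)\<^sup>2" for a b :: complex
    using abs_mult_le_half_squares[of "cmod a" "cmod b"] power_mono[OF norm_triangle_ineq4[of a b], of 2]
    by (simp add: power2_sum)
  then show "AE u in lborel. norm ((cmod (\<phi> u - \<psi> u))\<^sup>2) \<le> norm (2 * (cmod (\<phi> u))\<^sup>2 + 2 * (cmod (\<psi> u))\<^sup>2)"
    by (intro AE_I2) simp
qed (use assms(3,4) in measurable)

lemma L2_mult_tendsto_zero:
  fixes A :: "nat \<Rightarrow> real \<Rightarrow> complex" and \<psi> :: "real \<Rightarrow> complex"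
  assumes [measurable]: "\<And>n. A n \<in> borel_measurable borel" "\<psi> \<in> borel_measurable borel"
    and int_A: "\<And>n. integrable lborel (\<lambda>u. (cmod (A n u))\<^sup>2)"
    and lim_A: "(\<lambda>n. \<integral>u. (cmod (A n u))\<^sup>2 \<partial>lborel) \<longlonglongrightarrow> 0"
    and int_\<psi>: "integrable lborel (\<lambda>u. (cmod (\<psi> u))\<^sup>2)"
  shows "(\<lambda>n. \<integral>u. cmod (A n u) * cmod (\<psi> u) \<partial>lborel) \<longlonglongrightarrow> 0"
    and "\<And>n. integrable lborel (\<lambda>u. cmod (A n u) * cmod (\<psi> u))"
proof -
  have young: "cmod (A n u) * cmod (\<psi> u) \<le> t / 2 * (cmod (A n u))\<^sup>2 + 1 / (2 * t) * (cmod (\<psi> u))\<^sup>2"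
    if "t > 0" for t n u
  proof -
    have "t * (cmod (A n u) * cmod (\<psi> u)) \<le> (t * cmod (A n u))\<^sup>2 / 2 + (cmod (\<psi> u))\<^sup>2 / 2"
      using abs_mult_le_half_squares[of "t * cmod (A n u)" "cmod (\<psi> u)"] that by (simp add: mult.assoc)
    then show ?thesis
      using that by (simp add: field_simps power2_eq_square)
  qed
  have int_young: "integrable lborel (\<lambda>u. t / 2 * (cmod (A n u))\<^sup>2 + 1 / (2 * t) * (cmod (\<psi> u))\<^sup>2)" for t n
    using int_A int_\<psi> by simp
  show int: "integrable lborel (\<lambda>u. cmod (A n u) * cmod (\<psi> u))" for n
    by (rule Bochner_Integration.integrable_bound[OF int_young[of 1 n]]) (use young[of 1 n] in \<open>auto intro!: AE_I2\<close>)
  define B where "B = (\<integral>u. (cmod (\<psi> u))\<^sup>2 \<partial>lborel) + 1"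
  have B: "B > 0" unfolding B_def by (simp add: integral_nonneg_AE add_nonneg_pos)
  have bound: "(\<integral>u. cmod (A n u) * cmod (\<psi> u) \<partial>lborel) \<le> t / 2 * (\<integral>u. (cmod (A n u))\<^sup>2 \<partial>lborel) + B / (2 * t)"
    if t: "t > 0" for t n
  proof -
    have "(\<integral>u. cmod (A n u) * cmod (\<psi> u) \<partial>lborel)
        \<le> (\<integral>u. t / 2 * (cmod (A n u))\<^sup>2 + 1 / (2 * t) * (cmod (\<psi> u))\<^sup>2 \<partial>lborel)"
      using int int_young young t by (intro integral_mono) auto
    also have "\<dots> \<le> t / 2 * (\<integral>u. (cmod (A n u))\<^sup>2 \<partial>lborel) + B / (2 * t)"
      using int_A int_\<psi> t by (simp add: B_def divide_simps)
    finally show ?thesis .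
  qed
  show "(\<lambda>n. \<integral>u. cmod (A n u) * cmod (\<psi> u) \<partial>lborel) \<longlonglongrightarrow> 0"
  proof (rule tendstoI)
    fix \<epsilon> :: real assume \<epsilon>: "\<epsilon> > 0"
    define t where "t = B / \<epsilon>"
    have t: "t > 0" unfolding t_def using \<epsilon> B by simp
    have "eventually (\<lambda>n. dist (\<integral>u. (cmod (A n u))\<^sup>2 \<partial>lborel) 0 < \<epsilon> / t) sequentially"
      using lim_A t \<epsilon> by (intro tendstoD) auto
    then show "eventually (\<lambda>n. dist (\<integral>u. cmod (A n u) * cmod (\<psi> u) \<partial>lborel) 0 < \<epsilon>) sequentially"
    proof eventually_elim
      case (elim n)
      have "t / 2 * (\<integral>u. (cmod (A n u))\<^sup>2 \<partial>lborel) < t / 2 * (\<epsilon> / t)"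
        using elim t by (intro mult_strict_left_mono) (auto simp: dist_real_def)
      moreover have "t / 2 * (\<epsilon> / t) = \<epsilon> / 2" "B / (2 * t) = \<epsilon> / 2"
        using t \<epsilon> B by (simp_all add: t_def)
      ultimately show ?case
        using bound[OF t, of n] by (simp add: dist_real_def integral_nonneg_AE)
    qed
  qed
qed

lemma tendsto_iFT_FT_truncation_mult:
  fixes g :: "real \<Rightarrow> real" and G \<psi> :: "real \<Rightarrow> complex"
  assumes [measurable]: "g \<in> borel_measurable borel" and g_sq: "integrable lborel (\<lambda>x. (g x)\<^sup>2)"
    and G: "plancherel_FT g G"
    and int_\<psi>: "integrable lborel \<psi>" and \<psi>_sq: "integrable lborel (\<lambda>u. (cmod (\<psi> u))\<^sup>2)"
  shows "(\<lambda>n. iFT (\<lambda>u. FT (\<lambda>y. indicator {- real n..real n} y * g y) u * \<psi> u) x)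
           \<longlonglongrightarrow> iFT (\<lambda>u. G u * \<psi> u) x"
proof -
  have [measurable]: "G \<in> borel_measurable borel" and G_sq: "integrable lborel (\<lambda>u. (cmod (G u))\<^sup>2)"
    and lim_G: "(\<lambda>n. \<integral>u. (cmod (G u - FT (\<lambda>y. indicator {- real n..real n} y * g y) u))\<^sup>2 \<partial>lborel) \<longlonglongrightarrow> 0"
    using G unfolding plancherel_FT_def by auto
  have [measurable]: "\<psi> \<in> borel_measurable borel"
    using int_\<psi> by (simp add: borel_measurable_integrable)
  define g\<^sub>n where "g\<^sub>n n = (\<lambda>y. indicator {- real n..real n} y * g y)" for n
  have [measurable]: "g\<^sub>n n \<in> borel_measurable borel" for n unfolding g\<^sub>n_def by measurable
  have int_g\<^sub>n: "integrable lborel (g\<^sub>n n)" for n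
    unfolding g\<^sub>n_def by (rule integrable_indicator_mult) (use g_sq in simp_all)
  have FT_g\<^sub>n_sq: "integrable lborel (\<lambda>u. (cmod (FT (g\<^sub>n n) u))\<^sup>2)" for n
  proof (rule square_integrable_FT[OF _ int_g\<^sub>n])
    show "integrable lborel (\<lambda>y. (g\<^sub>n n y)\<^sup>2)"
      by (rule Bochner_Integration.integrable_bound[OF g_sq]) (auto simp: g\<^sub>n_def indicator_def)
  qed simp
  have int_FT_g\<^sub>n_\<psi>: "integrable lborel (\<lambda>u. FT (g\<^sub>n n) u * \<psi> u)" for n
  proof (rule Bochner_Integration.integrable_bound)
    show "integrable lborel (\<lambda>u. (\<integral>y. \<bar>g\<^sub>n n y\<bar> \<partial>lborel) * norm (\<psi> u))"
      using int_\<psi> by simp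
    show "AE u in lborel. norm (FT (g\<^sub>n n) u * \<psi> u) \<le> norm ((\<integral>y. \<bar>g\<^sub>n n y\<bar> \<partial>lborel) * norm (\<psi> u))"
      using norm_FT_le[of "g\<^sub>n n"] by (intro AE_I2) (simp add: norm_mult mult_right_mono)
  qed measurable
  have int_G_\<psi>: "integrable lborel (\<lambda>u. G u * \<psi> u)"
    using G_sq \<psi>_sq by (rule integrable_mult_square_integrable) measurable
  define A where "A n u = G u - FT (g\<^sub>n n) u" for n u
  have [measurable]: "A n \<in> borel_measurable borel" for n unfolding A_def by measurable
  have A_sq: "integrable lborel (\<lambda>u. (cmod (A n u))\<^sup>2)" for n
    unfolding A_def using G_sq FT_g\<^sub>n_sq by (rule square_integrable_diff) measurable
  have "(\<lambda>n. iFT (\<lambda>u. FT (g\<^sub>n n) u * \<psi> u) x - iFT (\<lambda>u. G u * \<psi> u) x) \<longlonglongrightarrow> 0"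
  proof (rule tendsto_norm_zero_cancel, rule Lim_null_comparison)
    show "(\<lambda>n. \<integral>u. cmod (A n u) * cmod (\<psi> u) \<partial>lborel) \<longlonglongrightarrow> 0"
    proof (rule L2_mult_tendsto_zero(1)[OF _ _ A_sq _ \<psi>_sq])
      show "(\<lambda>n. \<integral>u. (cmod (A n u))\<^sup>2 \<partial>lborel) \<longlonglongrightarrow> 0"
        using lim_G unfolding A_def g\<^sub>n_def .
    qed measurable
    have "norm (iFT (\<lambda>u. FT (g\<^sub>n n) u * \<psi> u) x - iFT (\<lambda>u. G u * \<psi> u) x)
        = norm (iFT (\<lambda>u. A n u * \<psi> u) x)" for n
    proof -
      have "iFT (\<lambda>u. A n u * \<psi> u) x = iFT (\<lambda>u. G u * \<psi> u) x - iFT (\<lambda>u. FT (g\<^sub>n n) u * \<psi> u) x"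
        unfolding A_def left_diff_distrib by (rule iFT_diff[OF int_G_\<psi> int_FT_g\<^sub>n_\<psi>])
      then show ?thesis by (simp add: norm_minus_commute)
    qed
    also have "\<dots> n \<le> (\<integral>u. cmod (A n u) * cmod (\<psi> u) \<partial>lborel)" for n
      using norm_iFT_le[of "\<lambda>u. A n u * \<psi> u" x] by (simp add: norm_mult)
    finally show "\<forall>\<^sub>F n in sequentially. norm (norm (iFT (\<lambda>u. FT (g\<^sub>n n) u * \<psi> u) x - iFT (\<lambda>u. G u * \<psi> u) x))
        \<le> (\<integral>u. cmod (A n u) * cmod (\<psi> u) \<partial>lborel)"
      by simp
  qed
  then show ?thesis
    by (simp add: LIM_zero_iff g\<^sub>n_def)
qed

lemma tendsto_integral_truncation:
  fixes g :: "real \<Rightarrow> real" and \<phi> :: "real \<Rightarrow> complex"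
  assumes int: "integrable lborel (\<lambda>y. complex_of_real (g y) * \<phi> y)"
  shows "(\<lambda>n. \<integral>y. complex_of_real (indicator {- real n..real n} y * g y) * \<phi> y \<partial>lborel)
           \<longlonglongrightarrow> (\<integral>y. complex_of_real (g y) * \<phi> y \<partial>lborel)"
proof (rule integral_dominated_convergence[where w="\<lambda>y. norm (complex_of_real (g y) * \<phi> y)"])
  have [measurable]: "(\<lambda>y. complex_of_real (g y) * \<phi> y) \<in> borel_measurable borel"
    using int by (simp add: borel_measurable_integrable)
  have eq: "complex_of_real (indicator {- real n..real n} y * g y) * \<phi> y
      = complex_of_real (indicator {- real n..real n} y) * (complex_of_real (g y) * \<phi> y)" for n y
    by simp
  show "(\<lambda>y. complex_of_real (indicator {- real n..real n} y * g y) * \<phi> y) \<in> borel_measurable lborel" for n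
    unfolding eq by measurable
  show "AE y in lborel. (\<lambda>n. complex_of_real (indicator {- real n..real n} y * g y) * \<phi> y)
      \<longlonglongrightarrow> complex_of_real (g y) * \<phi> y"
  proof (intro AE_I2)
    fix y
    obtain N :: nat where "\<bar>y\<bar> \<le> real N" using real_arch_simple by blast
    then have "\<forall>\<^sub>F n in sequentially.
        complex_of_real (g y) * \<phi> y = complex_of_real (indicator {- real n..real n} y * g y) * \<phi> y"
      unfolding eventually_sequentially by (intro exI[of _ N]) (auto simp: indicator_def abs_le_iff)
    then show "(\<lambda>n. complex_of_real (indicator {- real n..real n} y * g y) * \<phi> y) \<longlonglongrightarrow> complex_of_real (g y) * \<phi> y"
      by (rule Lim_transform_eventually[OF tendsto_const])
  qed
qed (use integrable_norm[OF int] borel_measurable_integrable[OF int] in \<open>auto simp: indicator_def norm_mult intro!: AE_I2\<close>)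

lemma iFT_plancherel_mult:
  fixes g :: "real \<Rightarrow> real" and G \<psi> :: "real \<Rightarrow> complex"
  assumes "g \<in> borel_measurable borel" and g_sq: "integrable lborel (\<lambda>x. (g x)\<^sup>2)"
    and "plancherel_FT g G"
    and int_\<psi>: "integrable lborel \<psi>" and "integrable lborel (\<lambda>u. (cmod (\<psi> u))\<^sup>2)"
    and int_conv: "integrable lborel (\<lambda>y. complex_of_real (g y) * iFT \<psi> (x - y))"
  shows "iFT (\<lambda>u. G u * \<psi> u) x = (\<integral>y. complex_of_real (g y) * iFT \<psi> (x - y) \<partial>lborel)"
proof (rule LIMSEQ_unique[OF tendsto_iFT_FT_truncation_mult[OF assms(1-5)]])
  have "iFT (\<lambda>u. FT (\<lambda>y. indicator {- real n..real n} y * g y) u * \<psi> u) x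
      = (\<integral>y. complex_of_real (indicator {- real n..real n} y * g y) * iFT \<psi> (x - y) \<partial>lborel)" for n
    by (rule iFT_FT_mult[OF integrable_indicator_mult[OF assms(1) g_sq] int_\<psi>])
  then show "(\<lambda>n. iFT (\<lambda>u. FT (\<lambda>y. indicator {- real n..real n} y * g y) u * \<psi> u) x)
      \<longlonglongrightarrow> (\<integral>y. complex_of_real (g y) * iFT \<psi> (x - y) \<partial>lborel)"
    using tendsto_integral_truncation[OF int_conv] by simp
qed

section \<open>Convolution powers of the reflected measure\<close>

lemma borel_measurable_char [measurable]:
  assumes "finite_measure M" and sets_M [measurable_cong]: "sets M = sets borel"
  shows "char M \<in> borel_measurable borel"
proof -
  interpret finite_measure M by fact
  have "(\<lambda>u. \<integral>y. iexp (u * y) \<partial>M) \<in> borel_measurable borel"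
    by (rule borel_measurable_lebesgue_integral) measurable
  then show ?thesis unfolding char_def .
qed

lemma norm_char_le:
  assumes "finite_measure M" and "sets M = sets borel"
  shows "norm (char M u) \<le> measure M UNIV"
proof -
  interpret finite_measure M by fact
  have "space M = UNIV" using sets_eq_imp_space_eq[OF assms(2)] by simp
  then show ?thesis
    using integral_norm_bound[of M "\<lambda>y. iexp (u * y)"] by (simp add: char_def)
qed

lemma
  assumes "finite_measure M" and "finite_measure N"
    and sets_M [measurable_cong]: "sets M = sets borel" and sets_N [measurable_cong]: "sets N = sets borel"
  shows char_convolution: "char (convolution M N) u = char M u * char N u"
    and measure_convolution_UNIV: "measure (convolution M N) UNIV = measure M UNIV * measure N UNIV"
proof -
  interpret M: finite_measure M by fact
  interpret N: finite_measure N by fact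
  interpret pair_sigma_finite M N ..
  have space_M: "space M = UNIV" and space_N: "space N = UNIV"
    using sets_eq_imp_space_eq[OF sets_M] sets_eq_imp_space_eq[OF sets_N] by simp_all
  have "finite_measure (M \<Otimes>\<^sub>M N)" by (rule finite_measure_pair_measure) fact+
  then have int: "integrable (M \<Otimes>\<^sub>M N) (\<lambda>(x, y). iexp (u * x) * iexp (u * y))"
    by (intro finite_measure.integrable_const_bound[where B=1]) (auto simp: norm_mult)
  have "char (convolution M N) u = (\<integral>p. iexp (u * (case p of (x, y) \<Rightarrow> x + y)) \<partial>(M \<Otimes>\<^sub>M N))"
    unfolding char_def convolution_def by (rule integral_distr) measurable
  also have "\<dots> = (\<integral>(x, y). iexp (u * x) * iexp (u * y) \<partial>(M \<Otimes>\<^sub>M N))"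
    by (intro Bochner_Integration.integral_cong refl) (auto simp: distrib_left exp_add)
  also have "\<dots> = char M u * char N u"
    using integral_fst[OF int] by (simp add: char_def)
  finally show "char (convolution M N) u = char M u * char N u" .
  have "emeasure (convolution M N) UNIV = emeasure (M \<Otimes>\<^sub>M N) (space M \<times> space N)"
    unfolding convolution_def by (subst emeasure_distr) (auto simp: space_pair_measure space_M space_N)
  also have "\<dots> = emeasure M (space M) * emeasure N (space N)"
    by (rule N.emeasure_pair_measure_Times) auto
  finally have "emeasure (convolution M N) UNIV = ennreal (measure M UNIV * measure N UNIV)"
    by (simp add: M.emeasure_eq_measure N.emeasure_eq_measure space_M space_N ennreal_mult)
  then show "measure (convolution M N) UNIV = measure M UNIV * measure N UNIV"
    by (simp add: measure_def)
qed

lemma sets_conv_pow [measurable_cong]: "sets (conv_pow N k) = sets borel"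
  by (cases k) simp_all

lemma finite_measure_conv_pow:
  assumes "finite_measure N" and "sets N = sets borel"
  shows "finite_measure (conv_pow N k)"
proof (induction k)
  case 0
  show ?case
    using prob_space_return[of "0::real" borel] by (simp add: prob_space_def)
next
  case (Suc k)
  then show ?case using assms by (simp add: convolution_finite sets_conv_pow)
qed

lemma
  assumes "finite_measure N" and "sets N = sets borel"
  shows measure_conv_pow_UNIV: "measure (conv_pow N k) UNIV = measure N UNIV ^ k"
    and char_conv_pow: "char (conv_pow N k) u = char N u ^ k"
proof (induction k)
  case 0
  show "measure (conv_pow N 0) UNIV = measure N UNIV ^ 0"
    by (simp add: measure_return)
  show "char (conv_pow N 0) u = char N u ^ 0"
    by (simp add: char_def integral_return)
next
  case (Suc k)
  note facts = assms(1) finite_measure_conv_pow[OF assms, of k] assms(2) sets_conv_pow[of N k]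
  show "measure (conv_pow N (Suc k)) UNIV = measure N UNIV ^ Suc k"
    using Suc.IH(1) measure_convolution_UNIV[OF facts] by simp
  show "char (conv_pow N (Suc k)) u = char N u ^ Suc k"
    using Suc.IH(2) char_convolution[OF facts] by simp
qed

lemma
  assumes "finite_measure \<nu>" and sets_\<nu> [measurable_cong]: "sets \<nu> = sets borel"
  shows finite_measure_refl_meas: "finite_measure (refl_meas \<nu>)"
    and sets_refl_meas: "sets (refl_meas \<nu>) = sets borel"
    and measure_refl_meas_UNIV: "measure (refl_meas \<nu>) UNIV = measure \<nu> UNIV"
    and char_refl_meas: "char (refl_meas \<nu>) u = char \<nu> (- u)"
proof -
  interpret finite_measure \<nu> by fact
  have space_\<nu>: "space \<nu> = UNIV" using sets_eq_imp_space_eq[OF sets_\<nu>] by simp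
  show "finite_measure (refl_meas \<nu>)"
    unfolding refl_meas_def by (rule finite_measure_distr) measurable
  show "sets (refl_meas \<nu>) = sets borel"
    by (simp add: refl_meas_def)
  show "measure (refl_meas \<nu>) UNIV = measure \<nu> UNIV"
    unfolding refl_meas_def by (subst measure_distr) (auto simp: space_\<nu>)
  show "char (refl_meas \<nu>) u = char \<nu> (- u)"
    unfolding refl_meas_def char_def by (subst integral_distr) auto
qed

lemma
  assumes "finite_measure \<nu>" and "sets \<nu> = sets borel"
  shows finite_measure_conv_pow_refl_meas: "finite_measure (conv_pow (refl_meas \<nu>) k)"
    and measure_conv_pow_refl_meas_UNIV: "measure (conv_pow (refl_meas \<nu>) k) UNIV = measure \<nu> UNIV ^ k"
    and char_conv_pow_refl_meas: "char (conv_pow (refl_meas \<nu>) k) u = char \<nu> (- u) ^ k"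
  using finite_measure_conv_pow[OF finite_measure_refl_meas[OF assms] sets_refl_meas[OF assms]]
    measure_conv_pow_UNIV[OF finite_measure_refl_meas[OF assms] sets_refl_meas[OF assms]]
    char_conv_pow[OF finite_measure_refl_meas[OF assms] sets_refl_meas[OF assms]]
  by (simp_all add: measure_refl_meas_UNIV[OF assms] char_refl_meas[OF assms])

section \<open>The inverse characteristic function\<close>

lemma inverse_phi_uminus:
  "inverse (phi \<Delta> \<gamma> lam \<nu> (- u))
     = complex_of_real (exp (lam * \<Delta>)) * iexp (\<gamma> * \<Delta> * u) * exp (- (complex_of_real \<Delta> * char \<nu> (- u)))"
proof -
  have "inverse (phi \<Delta> \<gamma> lam \<nu> (- u))
      = exp (complex_of_real (lam * \<Delta>) + \<i> * complex_of_real (\<gamma> * \<Delta> * u) + (- (complex_of_real \<Delta> * char \<nu> (- u))))"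
    unfolding phi_def by (simp add: exp_minus[symmetric] algebra_simps)
  then show ?thesis
    by (simp only: exp_add exp_of_real)
qed

lemma borel_measurable_inverse_phi_uminus [measurable]:
  assumes "finite_measure \<nu>" and "sets \<nu> = sets borel"
  shows "(\<lambda>u. inverse (phi \<Delta> \<gamma> lam \<nu> (- u))) \<in> borel_measurable borel"
proof -
  have [measurable]: "char \<nu> \<in> borel_measurable borel"
    by (rule borel_measurable_char[OF assms])
  show ?thesis unfolding inverse_phi_uminus by measurable
qed

lemma norm_inverse_phi_uminus_le:
  assumes "finite_measure \<nu>" and "sets \<nu> = sets borel" and "measure \<nu> UNIV = lam"
  shows "norm (inverse (phi \<Delta> \<gamma> lam \<nu> (- u))) \<le> exp (lam * \<Delta>) * exp (\<bar>\<Delta>\<bar> * lam)"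
proof -
  have "Re (- (complex_of_real \<Delta> * char \<nu> (- u))) \<le> \<bar>\<Delta>\<bar> * cmod (char \<nu> (- u))"
    using complex_Re_le_cmod[of "- (complex_of_real \<Delta> * char \<nu> (- u))"] by (simp add: norm_mult)
  also have "\<dots> \<le> \<bar>\<Delta>\<bar> * lam"
    using norm_char_le[OF assms(1,2), of "- u"] assms(3) by (intro mult_left_mono) auto
  finally have "exp (Re (- (complex_of_real \<Delta> * char \<nu> (- u)))) \<le> exp (\<bar>\<Delta>\<bar> * lam)"
    by simp
  then show ?thesis
    unfolding inverse_phi_uminus norm_mult norm_exp_eq_Re by simp
qed

lemma summable_power_div_fact: "summable (\<lambda>k. (x::real) ^ k / fact k)"
  using summable_exp[of x] by (simp add: divide_inverse mult.commute)

lemma exp_minus_mult_sums: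
  "(\<lambda>k. complex_of_real ((- \<Delta>) ^ k / fact k) * C ^ k) sums exp (- (complex_of_real \<Delta> * C))"
proof -
  have "(- (complex_of_real \<Delta> * C)) ^ k /\<^sub>R fact k = complex_of_real ((- \<Delta>) ^ k / fact k) * C ^ k" for k
    by (simp add: scaleR_conv_of_real power_mult_distrib power_minus' field_simps)
  then show ?thesis
    using exp_converges[of "- (complex_of_real \<Delta> * C)"] by simp
qed

lemma norm_char_conv_pow_refl_meas_le:
  assumes "finite_measure \<nu>" and "sets \<nu> = sets borel" and "measure \<nu> UNIV = lam"
  shows "norm (char (conv_pow (refl_meas \<nu>) k) u) \<le> lam ^ k"
  using norm_char_le[OF finite_measure_conv_pow_refl_meas[OF assms(1,2)] sets_conv_pow, of k u] assms(3)
  by (simp add: measure_conv_pow_refl_meas_UNIV[OF assms(1,2)])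

lemma exp_minus_char_sums:
  assumes "finite_measure \<nu>" and "sets \<nu> = sets borel"
  shows "(\<lambda>k. complex_of_real ((- \<Delta>) ^ k / fact k) * char (conv_pow (refl_meas \<nu>) k) u)
           sums exp (- (complex_of_real \<Delta> * char \<nu> (- u)))"
  using exp_minus_mult_sums[of \<Delta> "char \<nu> (- u)"] by (simp add: char_conv_pow_refl_meas[OF assms])

lemma iFT_inverse_phi_mult_FT:
  fixes f :: "real \<Rightarrow> real"
  assumes fin: "finite_measure \<nu>" and sets: "sets \<nu> = sets borel" and lam: "measure \<nu> UNIV = lam"
    and cont: "continuous_on UNIV f" and int: "integrable lborel f" and int_FT: "integrable lborel (FT f)"
  shows "iFT (\<lambda>u. inverse (phi \<Delta> \<gamma> lam \<nu> (- u)) * FT f u) x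
       = conv_inv_meas (\<lambda>y. complex_of_real (f y)) \<Delta> \<gamma> lam \<nu> x"
proof -
  define P where "P = conv_pow (refl_meas \<nu>)"
  have fin_P: "finite_measure (P k)" and sets_P: "sets (P k) = sets borel" for k
    by (simp_all add: P_def finite_measure_conv_pow_refl_meas[OF fin sets] sets_conv_pow)
  define c where "c k = complex_of_real ((- \<Delta>) ^ k / fact k)" for k
  define \<psi> where "\<psi> k u = c k * (char (P k) u * FT f u)" for k u
  have [measurable]: "FT f \<in> borel_measurable borel" "char (P k) \<in> borel_measurable borel" for k
    using int_FT borel_measurable_char[OF fin_P sets_P] by (simp_all add: borel_measurable_integrable)
  have expand: "inverse (phi \<Delta> \<gamma> lam \<nu> (- u)) * FT f u
      = complex_of_real (exp (lam * \<Delta>)) * (iexp (\<gamma> * \<Delta> * u) * (\<Sum>k. \<psi> k u))" for u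
  proof -
    have "(\<lambda>k. \<psi> k u) sums (exp (- (complex_of_real \<Delta> * char \<nu> (- u))) * FT f u)"
      using sums_mult2[OF exp_minus_char_sums[OF fin sets], of \<Delta> u "FT f u"]
      by (simp add: \<psi>_def c_def P_def mult.assoc)
    then show ?thesis
      by (simp add: inverse_phi_uminus sums_iff mult_ac)
  qed
  have norm_\<psi>: "norm (\<psi> k u) \<le> (\<bar>\<Delta>\<bar> * lam) ^ k / fact k * norm (FT f u)" for k u
  proof -
    have "norm (\<psi> k u) = \<bar>\<Delta>\<bar> ^ k / fact k * (norm (char (P k) u) * norm (FT f u))"
      by (simp add: \<psi>_def c_def norm_mult norm_divide norm_power)
    also have "\<dots> \<le> \<bar>\<Delta>\<bar> ^ k / fact k * (lam ^ k * norm (FT f u))"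
      using norm_char_conv_pow_refl_meas_le[OF fin sets lam]
      by (intro mult_left_mono mult_right_mono) (auto simp: P_def)
    finally show ?thesis by (simp add: power_mult_distrib)
  qed
  have int_\<psi>: "integrable lborel (\<psi> k)" for k
  proof (rule Bochner_Integration.integrable_bound)
    show "integrable lborel (\<lambda>u. (\<bar>\<Delta>\<bar> * lam) ^ k / fact k * norm (FT f u))"
      using int_FT by simp
    have "lam \<ge> 0" using lam measure_nonneg[of \<nu> UNIV] by simp
    then show "AE u in lborel. norm (\<psi> k u) \<le> norm ((\<bar>\<Delta>\<bar> * lam) ^ k / fact k * norm (FT f u))"
      using norm_\<psi> by (intro AE_I2) (simp add: abs_mult)
  qed (unfold \<psi>_def, measurable)
  have "iFT (\<psi> k) y = c k * (\<integral>z. complex_of_real (f (y - z)) \<partial>P k)" for k y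
    unfolding \<psi>_def iFT_cmult iFT_char_mult_FT[OF fin_P sets_P cont int int_FT] ..
  then have "(\<lambda>k. c k * (\<integral>z. complex_of_real (f (x - \<gamma> * \<Delta> - z)) \<partial>P k))
      sums iFT (\<lambda>u. \<Sum>k. \<psi> k u) (x - \<gamma> * \<Delta>)"
    using iFT_sums[OF int_\<psi> int_FT norm_\<psi> summable_power_div_fact] by simp
  then show ?thesis
    unfolding conv_inv_meas_def expand iFT_cmult iFT_shift
    by (simp add: sums_iff c_def P_def)
qed

section \<open>Convolution with the inverse measure\<close>

lemma integral_mult_reflect:
  fixes f g :: "real \<Rightarrow> real"
  shows "(\<integral>y. g y * f (z - y) \<partial>lborel) = (\<integral>y. g (z - y) * f y \<partial>lborel)"
  using lborel_integral_real_affine[of "-1" "\<lambda>y. g y * f (z - y)" z] by simp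

lemma
  fixes f g :: "real \<Rightarrow> real"
  assumes [measurable]: "f \<in> borel_measurable borel" "g \<in> borel_measurable borel"
    and f_sq: "integrable lborel (\<lambda>x. (f x)\<^sup>2)" and g_sq: "integrable lborel (\<lambda>x. (g x)\<^sup>2)"
  shows integrable_mult_shift: "integrable lborel (\<lambda>y. g y * f (c - y))"
    and integral_abs_mult_shift_le:
      "(\<integral>y. \<bar>g y * f (c - y)\<bar> \<partial>lborel) \<le> ((\<integral>y. (g y)\<^sup>2 \<partial>lborel) + (\<integral>y. (f y)\<^sup>2 \<partial>lborel)) / 2"
proof -
  have f_sq_shift: "integrable lborel (\<lambda>y. (f (c - y))\<^sup>2)"
    using lborel_integrable_real_affine[OF f_sq, of "-1" c] by simp
  have shift: "(\<integral>y. (f (c - y))\<^sup>2 \<partial>lborel) = (\<integral>y. (f y)\<^sup>2 \<partial>lborel)"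
    using lborel_integral_real_affine[of "-1" "\<lambda>y. (f y)\<^sup>2" c] by simp
  have int_bound: "integrable lborel (\<lambda>y. (g y)\<^sup>2 / 2 + (f (c - y))\<^sup>2 / 2)"
    using g_sq f_sq_shift by simp
  have bound: "\<bar>g y * f (c - y)\<bar> \<le> (g y)\<^sup>2 / 2 + (f (c - y))\<^sup>2 / 2" for y
    by (rule abs_mult_le_half_squares)
  show int: "integrable lborel (\<lambda>y. g y * f (c - y))"
    by (rule Bochner_Integration.integrable_bound[OF int_bound]) (use bound in \<open>auto intro!: AE_I2\<close>)
  have "(\<integral>y. \<bar>g y * f (c - y)\<bar> \<partial>lborel) \<le> (\<integral>y. (g y)\<^sup>2 / 2 + (f (c - y))\<^sup>2 / 2 \<partial>lborel)"
    using int int_bound bound by (intro integral_mono) auto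
  also have "\<dots> = ((\<integral>y. (g y)\<^sup>2 \<partial>lborel) + (\<integral>y. (f y)\<^sup>2 \<partial>lborel)) / 2"
    using g_sq f_sq_shift shift by simp
  finally show "(\<integral>y. \<bar>g y * f (c - y)\<bar> \<partial>lborel) \<le> ((\<integral>y. (g y)\<^sup>2 \<partial>lborel) + (\<integral>y. (f y)\<^sup>2 \<partial>lborel)) / 2" .
qed

lemma
  fixes f g :: "real \<Rightarrow> real" and Q :: "real measure"
  assumes "finite_measure Q" and sets_Q [measurable_cong]: "sets Q = sets borel"
    and [measurable]: "f \<in> borel_measurable borel" "g \<in> borel_measurable borel"
    and f_sq: "integrable lborel (\<lambda>x. (f x)\<^sup>2)" and g_sq: "integrable lborel (\<lambda>x. (g x)\<^sup>2)"
  shows integrable_mult_integral_shift: "integrable lborel (\<lambda>y. g y * (\<integral>w. f (v - w - y) \<partial>Q))"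
    and integral_mult_integral_shift:
      "(\<integral>y. g y * (\<integral>w. f (v - w - y) \<partial>Q) \<partial>lborel) = (\<integral>w. fconv g f (v - w) \<partial>Q)"
    and integral_abs_mult_integral_shift_le:
      "(\<integral>y. \<bar>g y * (\<integral>w. f (v - w - y) \<partial>Q)\<bar> \<partial>lborel)
         \<le> ((\<integral>y. (g y)\<^sup>2 \<partial>lborel) + (\<integral>y. (f y)\<^sup>2 \<partial>lborel)) / 2 * measure Q UNIV"
proof -
  interpret Q: finite_measure Q by fact
  interpret pair_sigma_finite Q lborel ..
  have space_Q: "space Q = UNIV" using sets_eq_imp_space_eq[OF sets_Q] by simp
  define M where "M = ((\<integral>y. (g y)\<^sup>2 \<partial>lborel) + (\<integral>y. (f y)\<^sup>2 \<partial>lborel)) / 2"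
  define H where "H w y = g y * f (v - w - y)" for w y
  have [measurable]: "(\<lambda>(w, y). H w y) \<in> borel_measurable (Q \<Otimes>\<^sub>M lborel)"
    unfolding H_def by measurable
  have int_H: "integrable lborel (H w)" and int_abs_H: "(\<integral>y. \<bar>H w y\<bar> \<partial>lborel) \<le> M" for w
    unfolding H_def M_def using integrable_mult_shift[OF _ _ f_sq g_sq, of "v - w"]
      integral_abs_mult_shift_le[OF _ _ f_sq g_sq, of "v - w"] by (simp_all add: algebra_simps)
  have int_prod: "integrable (Q \<Otimes>\<^sub>M lborel) (\<lambda>(w, y). H w y)"
  proof (rule Fubini_integrable)
    show "integrable Q (\<lambda>w. \<integral>y. norm ((\<lambda>(w, y). H w y) (w, y)) \<partial>lborel)"
      using int_abs_H by (intro Q.integrable_const_bound[where B=M]) auto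
  qed (use int_H in auto)
  have int_abs_prod: "integrable (Q \<Otimes>\<^sub>M lborel) (\<lambda>(w, y). \<bar>H w y\<bar>)"
    using integrable_abs[OF int_prod] by (simp add: case_prod_beta')
  have H_inner: "(\<integral>w. H w y \<partial>Q) = g y * (\<integral>w. f (v - w - y) \<partial>Q)" for y
    unfolding H_def by (rule integral_mult_right_zero)
  show int: "integrable lborel (\<lambda>y. g y * (\<integral>w. f (v - w - y) \<partial>Q))"
    using integrable_snd[OF int_prod] by (simp add: H_inner)
  have "(\<integral>y. g y * (\<integral>w. f (v - w - y) \<partial>Q) \<partial>lborel) = (\<integral>w. (\<integral>y. H w y \<partial>lborel) \<partial>Q)"
    using Fubini_integral[OF int_prod] by (simp add: H_inner)
  also have "\<dots> = (\<integral>w. fconv g f (v - w) \<partial>Q)"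
    unfolding H_def fconv_def by (intro Bochner_Integration.integral_cong refl integral_mult_reflect)
  finally show "(\<integral>y. g y * (\<integral>w. f (v - w - y) \<partial>Q) \<partial>lborel) = (\<integral>w. fconv g f (v - w) \<partial>Q)" .
  have "(\<integral>y. \<bar>g y * (\<integral>w. f (v - w - y) \<partial>Q)\<bar> \<partial>lborel) \<le> (\<integral>y. (\<integral>w. \<bar>H w y\<bar> \<partial>Q) \<partial>lborel)"
    using int integrable_snd[OF int_abs_prod]
    by (intro integral_mono) (auto simp flip: H_inner intro: integral_abs_bound)
  also have "\<dots> = (\<integral>w. (\<integral>y. \<bar>H w y\<bar> \<partial>lborel) \<partial>Q)"
    using Fubini_integral[OF int_abs_prod] by simp
  also have "\<dots> \<le> (\<integral>w. M \<partial>Q)"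
    using int_abs_H integrable_fst[OF int_abs_prod] by (intro integral_mono) auto
  finally show "(\<integral>y. \<bar>g y * (\<integral>w. f (v - w - y) \<partial>Q)\<bar> \<partial>lborel)
      \<le> ((\<integral>y. (g y)\<^sup>2 \<partial>lborel) + (\<integral>y. (f y)\<^sup>2 \<partial>lborel)) / 2 * measure Q UNIV"
    by (simp add: M_def space_Q mult.commute)
qed

lemma conv_inv_meas_of_real:
  fixes \<phi> :: "real \<Rightarrow> real"
  assumes "(\<lambda>k. (- \<Delta>) ^ k / fact k * (\<integral>y. \<phi> (x - \<gamma> * \<Delta> - y) \<partial>conv_pow (refl_meas \<nu>) k)) sums s"
  shows "conv_inv_meas (\<lambda>y. complex_of_real (\<phi> y)) \<Delta> \<gamma> lam \<nu> x = complex_of_real (exp (lam * \<Delta>) * s)"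
proof -
  have "(\<lambda>k. complex_of_real ((- \<Delta>) ^ k / fact k) * (\<integral>y. complex_of_real (\<phi> (x - \<gamma> * \<Delta> - y)) \<partial>conv_pow (refl_meas \<nu>) k))
      sums complex_of_real s"
    using sums_of_real[OF assms] by (simp only: of_real_mult integral_complex_of_real)
  then show ?thesis
    unfolding conv_inv_meas_def by (simp add: sums_iff)
qed

lemma abs_integral_conv_pow_refl_meas_le:
  fixes \<phi> :: "real \<Rightarrow> real"
  assumes "finite_measure \<nu>" and "sets \<nu> = sets borel" and "measure \<nu> UNIV = lam"
    and [measurable]: "\<phi> \<in> borel_measurable borel" and \<phi>_le: "\<And>z. \<bar>\<phi> z\<bar> \<le> M"
  shows "\<bar>\<integral>w. \<phi> (t - w) \<partial>conv_pow (refl_meas \<nu>) k\<bar> \<le> M * lam ^ k"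
proof -
  interpret finite_measure "conv_pow (refl_meas \<nu>) k"
    by (rule finite_measure_conv_pow_refl_meas[OF assms(1,2)])
  have "\<bar>\<integral>w. \<phi> (t - w) \<partial>conv_pow (refl_meas \<nu>) k\<bar> \<le> (\<integral>w. M \<partial>conv_pow (refl_meas \<nu>) k)"
    using \<phi>_le order_trans[OF abs_ge_zero \<phi>_le]
    by (intro order_trans[OF integral_abs_bound] integral_mono integrable_const_bound[where B=M]) auto
  then show ?thesis
    using assms(3) measure_conv_pow_refl_meas_UNIV[OF assms(1,2), of k]
      sets_eq_imp_space_eq[OF sets_conv_pow[of "refl_meas \<nu>" k]]
    by (simp add: mult.commute)
qed

lemma summable_conv_inv_meas_series:
  fixes \<phi> :: "real \<Rightarrow> real"
  assumes "finite_measure \<nu>" and "sets \<nu> = sets borel" and "measure \<nu> UNIV = lam"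
    and "\<phi> \<in> borel_measurable borel" and "\<And>z. \<bar>\<phi> z\<bar> \<le> M"
  shows "summable (\<lambda>k. (- \<Delta>) ^ k / fact k * (\<integral>w. \<phi> (t - w) \<partial>conv_pow (refl_meas \<nu>) k))"
proof (rule summable_comparison_test'[OF summable_mult[OF summable_power_div_fact[of "\<bar>\<Delta>\<bar> * lam"], of M], of 0])
  show "norm ((- \<Delta>) ^ k / fact k * (\<integral>w. \<phi> (t - w) \<partial>conv_pow (refl_meas \<nu>) k))
      \<le> M * ((\<bar>\<Delta>\<bar> * lam) ^ k / fact k)" for k
    using mult_left_mono[OF abs_integral_conv_pow_refl_meas_le[OF assms, where t=t and k=k], of "\<bar>\<Delta>\<bar> ^ k / fact k"]
    by (simp add: abs_mult power_abs power_mult_distrib mult_ac)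
qed

lemma
  fixes f g :: "real \<Rightarrow> real"
  assumes fin: "finite_measure \<nu>" and sets: "sets \<nu> = sets borel" and lam: "measure \<nu> UNIV = lam"
    and f_meas [measurable]: "f \<in> borel_measurable borel" and f_le: "\<And>z. \<bar>f z\<bar> \<le> M"
    and f_sq: "integrable lborel (\<lambda>x. (f x)\<^sup>2)"
    and [measurable]: "g \<in> borel_measurable borel" and g_sq: "integrable lborel (\<lambda>x. (g x)\<^sup>2)"
  shows integrable_mult_conv_inv_meas_series:
      "integrable lborel (\<lambda>y. g y * (\<Sum>k. (- \<Delta>) ^ k / fact k * (\<integral>w. f (v - w - y) \<partial>conv_pow (refl_meas \<nu>) k)))"
    and sums_integral_mult_conv_inv_meas_series:
      "(\<lambda>k. (- \<Delta>) ^ k / fact k * (\<integral>w. fconv g f (v - w) \<partial>conv_pow (refl_meas \<nu>) k))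
         sums (\<integral>y. g y * (\<Sum>k. (- \<Delta>) ^ k / fact k * (\<integral>w. f (v - w - y) \<partial>conv_pow (refl_meas \<nu>) k)) \<partial>lborel)"
proof -
  define P where "P = conv_pow (refl_meas \<nu>)"
  have fin_P: "finite_measure (P k)" and sets_P: "sets (P k) = sets borel"
    and measure_P: "measure (P k) UNIV = lam ^ k" for k
    using lam by (simp_all add: P_def finite_measure_conv_pow_refl_meas[OF fin sets] sets_conv_pow
        measure_conv_pow_refl_meas_UNIV[OF fin sets])
  define c where "c k = (- \<Delta>) ^ k / fact k" for k
  define b where "b k = (\<bar>\<Delta>\<bar> * lam) ^ k / fact k" for k
  have c_b: "\<bar>c k\<bar> * lam ^ k = b k" for k
    by (simp add: c_def b_def power_abs power_mult_distrib)
  define T where "T k y = c k * (g y * (\<integral>w. f (v - w - y) \<partial>P k))" for k y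
  have int_T: "integrable lborel (T k)" for k
    unfolding T_def by (intro integrable_mult_right integrable_mult_integral_shift fin_P sets_P f_sq g_sq) simp_all
  have "summable (\<lambda>k. \<integral>y. norm (T k y) \<partial>lborel)"
  proof (rule summable_comparison_test'[OF summable_mult[OF summable_power_div_fact], of 0])
    fix k
    define X where "X = ((\<integral>y. (g y)\<^sup>2 \<partial>lborel) + (\<integral>y. (f y)\<^sup>2 \<partial>lborel)) / 2"
    have "(\<integral>y. norm (T k y) \<partial>lborel) = \<bar>c k\<bar> * (\<integral>y. \<bar>g y * (\<integral>w. f (v - w - y) \<partial>P k)\<bar> \<partial>lborel)"
      by (simp add: T_def abs_mult)
    also have "\<dots> \<le> \<bar>c k\<bar> * (X * lam ^ k)"
      using integral_abs_mult_integral_shift_le[OF fin_P sets_P _ _ f_sq g_sq, of k v]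
      by (intro mult_left_mono) (simp_all add: X_def measure_P)
    also have "\<dots> = X * b k"
      using c_b[of k] by (simp add: mult_ac)
    finally show "norm (\<integral>y. norm (T k y) \<partial>lborel) \<le> X * ((\<bar>\<Delta>\<bar> * lam) ^ k / fact k)"
      by (simp add: integral_nonneg_AE b_def)
  qed
  moreover have "AE y in lborel. summable (\<lambda>k. norm (T k y))"
  proof (intro AE_I2)
    fix y
    show "summable (\<lambda>k. norm (T k y))"
    proof (rule summable_comparison_test'[OF summable_mult[OF summable_power_div_fact, of "\<bar>g y\<bar> * M"], of 0])
      fix k
      have "norm (T k y) = \<bar>c k\<bar> * \<bar>g y\<bar> * \<bar>\<integral>w. f (v - y - w) \<partial>P k\<bar>"
        by (simp add: T_def abs_mult algebra_simps)
      also have "\<dots> \<le> \<bar>c k\<bar> * \<bar>g y\<bar> * (M * lam ^ k)"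
        unfolding P_def by (intro mult_left_mono abs_integral_conv_pow_refl_meas_le[OF fin sets lam f_meas f_le]) auto
      also have "\<dots> = \<bar>g y\<bar> * M * b k"
        using c_b[of k] by (simp add: mult_ac)
      finally show "norm (norm (T k y)) \<le> \<bar>g y\<bar> * M * ((\<bar>\<Delta>\<bar> * lam) ^ k / fact k)"
        by (simp add: b_def)
    qed
  qed
  ultimately have sums_T: "(\<lambda>k. integral\<^sup>L lborel (T k)) sums (\<integral>y. (\<Sum>k. T k y) \<partial>lborel)"
    and int_sum_T: "integrable lborel (\<lambda>y. \<Sum>k. T k y)"
    by (simp_all add: sums_integral integrable_suminf int_T)
  have sum_T: "(\<Sum>k. T k y) = g y * (\<Sum>k. c k * (\<integral>w. f (v - w - y) \<partial>P k))" for y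
  proof -
    have "summable (\<lambda>k. c k * (\<integral>w. f (v - w - y) \<partial>P k))"
      using summable_conv_inv_meas_series[OF fin sets lam f_meas f_le, of \<Delta> "v - y"]
      by (simp add: c_def P_def algebra_simps)
    then show ?thesis
      unfolding T_def by (simp add: mult.left_commute[of _ "g y"] suminf_mult)
  qed
  show "integrable lborel (\<lambda>y. g y * (\<Sum>k. (- \<Delta>) ^ k / fact k * (\<integral>w. f (v - w - y) \<partial>conv_pow (refl_meas \<nu>) k)))"
    using int_sum_T unfolding sum_T by (simp add: c_def P_def)
  show "(\<lambda>k. (- \<Delta>) ^ k / fact k * (\<integral>w. fconv g f (v - w) \<partial>conv_pow (refl_meas \<nu>) k))
      sums (\<integral>y. g y * (\<Sum>k. (- \<Delta>) ^ k / fact k * (\<integral>w. f (v - w - y) \<partial>conv_pow (refl_meas \<nu>) k)) \<partial>lborel)"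
  proof -
    have "integral\<^sup>L lborel (T k) = c k * (\<integral>w. fconv g f (v - w) \<partial>P k)" for k
      unfolding T_def by (simp add: integral_mult_integral_shift[OF fin_P sets_P f_meas _ f_sq g_sq])
    then show ?thesis
      using sums_T unfolding sum_T by (simp add: c_def P_def)
  qed
qed

lemma
  fixes f g :: "real \<Rightarrow> real"
  assumes fin: "finite_measure \<nu>" and sets: "sets \<nu> = sets borel" and lam: "measure \<nu> UNIV = lam"
    and cont: "continuous_on UNIV f" and int: "integrable lborel f" and int_FT: "integrable lborel (FT f)"
    and f_sq: "integrable lborel (\<lambda>x. (f x)\<^sup>2)"
    and g: "g \<in> borel_measurable borel" and g_sq: "integrable lborel (\<lambda>x. (g x)\<^sup>2)"
  shows integrable_mult_conv_inv_meas:
      "integrable lborel (\<lambda>y. complex_of_real (g y) * conv_inv_meas (\<lambda>y. complex_of_real (f y)) \<Delta> \<gamma> lam \<nu> (x - y))"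
    and integral_mult_conv_inv_meas:
      "(\<integral>y. complex_of_real (g y) * conv_inv_meas (\<lambda>y. complex_of_real (f y)) \<Delta> \<gamma> lam \<nu> (x - y) \<partial>lborel)
         = conv_inv_meas (\<lambda>y. complex_of_real (fconv g f y)) \<Delta> \<gamma> lam \<nu> x"
proof -
  have f_meas: "f \<in> borel_measurable borel"
    using cont by (rule borel_measurable_continuous_onI)
  have f_le: "\<bar>f z\<bar> \<le> (\<integral>u. norm (FT f u) \<partial>lborel)" for z
    by (rule abs_le_integral_norm_FT[OF cont int int_FT])
  define v where "v = x - \<gamma> * \<Delta>"
  define S where "S y = (\<Sum>k. (- \<Delta>) ^ k / fact k * (\<integral>w. f (v - w - y) \<partial>conv_pow (refl_meas \<nu>) k))" for y
  have conv_eq: "conv_inv_meas (\<lambda>y. complex_of_real (f y)) \<Delta> \<gamma> lam \<nu> (x - y)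
      = complex_of_real (exp (lam * \<Delta>) * S y)" for y
  proof (rule conv_inv_meas_of_real)
    show "(\<lambda>k. (- \<Delta>) ^ k / fact k * (\<integral>w. f (x - y - \<gamma> * \<Delta> - w) \<partial>conv_pow (refl_meas \<nu>) k)) sums S y"
      using summable_sums[OF summable_conv_inv_meas_series[OF fin sets lam f_meas f_le, of \<Delta> "v - y"]]
      by (simp add: S_def v_def algebra_simps)
  qed
  note series = integrable_mult_conv_inv_meas_series[OF fin sets lam f_meas f_le f_sq g g_sq, of \<Delta> v]
    sums_integral_mult_conv_inv_meas_series[OF fin sets lam f_meas f_le f_sq g g_sq, of \<Delta> v]
  have "integrable lborel (\<lambda>y. complex_of_real (exp (lam * \<Delta>) * (g y * S y)))"
    using series(1) unfolding S_def by (intro integrable_of_real integrable_mult_right)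
  then show "integrable lborel (\<lambda>y. complex_of_real (g y) * conv_inv_meas (\<lambda>y. complex_of_real (f y)) \<Delta> \<gamma> lam \<nu> (x - y))"
    unfolding conv_eq by (simp add: ac_simps)
  have pointwise: "complex_of_real (g y) * complex_of_real (exp (lam * \<Delta>) * S y)
      = complex_of_real (exp (lam * \<Delta>) * (g y * S y))" for y
    by (simp add: mult.left_commute)
  have "(\<integral>y. complex_of_real (g y) * conv_inv_meas (\<lambda>y. complex_of_real (f y)) \<Delta> \<gamma> lam \<nu> (x - y) \<partial>lborel)
      = complex_of_real (exp (lam * \<Delta>) * (\<integral>y. g y * S y \<partial>lborel))"
    unfolding conv_eq pointwise by (simp only: integral_complex_of_real integral_mult_right_zero)
  also have "\<dots> = conv_inv_meas (\<lambda>y. complex_of_real (fconv g f y)) \<Delta> \<gamma> lam \<nu> x"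
    using series(2) by (intro conv_inv_meas_of_real[symmetric]) (simp add: S_def v_def)
  finally show "(\<integral>y. complex_of_real (g y) * conv_inv_meas (\<lambda>y. complex_of_real (f y)) \<Delta> \<gamma> lam \<nu> (x - y) \<partial>lborel)
      = conv_inv_meas (\<lambda>y. complex_of_real (fconv g f y)) \<Delta> \<gamma> lam \<nu> x" .
qed

lemma
  fixes m :: "real \<Rightarrow> complex" and f :: "real \<Rightarrow> real"
  assumes [measurable]: "m \<in> borel_measurable borel" and m_le: "\<And>u. norm (m u) \<le> B"
    and [measurable]: "f \<in> borel_measurable borel" and int_FT: "integrable lborel (FT f)"
  shows integrable_bounded_mult_FT: "integrable lborel (\<lambda>u. m u * FT f u)"
    and square_integrable_bounded_mult_FT: "integrable lborel (\<lambda>u. (cmod (m u * FT f u))\<^sup>2)"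
proof -
  have B: "B \<ge> 0" using m_le[of 0] norm_ge_zero order_trans by blast
  show "integrable lborel (\<lambda>u. m u * FT f u)"
  proof (rule Bochner_Integration.integrable_bound)
    show "integrable lborel (\<lambda>u. B * norm (FT f u))" using int_FT by simp
    show "AE u in lborel. norm (m u * FT f u) \<le> norm (B * norm (FT f u))"
      using m_le B by (intro AE_I2) (simp add: norm_mult mult_right_mono)
  qed measurable
  define L where "L = (\<integral>x. \<bar>f x\<bar> \<partial>lborel)"
  show "integrable lborel (\<lambda>u. (cmod (m u * FT f u))\<^sup>2)"
  proof (rule Bochner_Integration.integrable_bound)
    show "integrable lborel (\<lambda>u. B\<^sup>2 * L * norm (FT f u))" using int_FT by simp
    have "(cmod (m u * FT f u))\<^sup>2 \<le> B\<^sup>2 * L * norm (FT f u)" for u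
    proof -
      have "(cmod (m u * FT f u))\<^sup>2 \<le> (B * norm (FT f u))\<^sup>2"
        using m_le[of u] by (intro power_mono) (auto simp: norm_mult mult_right_mono)
      also have "\<dots> = B\<^sup>2 * (norm (FT f u) * norm (FT f u))"
        by (simp add: power2_eq_square mult_ac)
      also have "\<dots> \<le> B\<^sup>2 * (L * norm (FT f u))"
        unfolding L_def using norm_FT_le[of f u] by (intro mult_left_mono mult_right_mono) auto
      finally show ?thesis by (simp add: mult_ac)
    qed
    then show "AE u in lborel. norm ((cmod (m u * FT f u))\<^sup>2) \<le> norm (B\<^sup>2 * L * norm (FT f u))"
      by (intro AE_I2) (simp add: L_def)
  qed measurable
qed

lemma iFT_plancherel_inverse_phi_mult_FT:
  fixes f g :: "real \<Rightarrow> real" and G :: "real \<Rightarrow> complex"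
  assumes \<nu>: "finite_measure \<nu>" "sets \<nu> = sets borel" "measure \<nu> UNIV = lam"
    and cont: "continuous_on UNIV f" and int: "integrable lborel f" and int_FT: "integrable lborel (FT f)"
    and f_sq: "integrable lborel (\<lambda>x. (f x)\<^sup>2)"
    and g: "g \<in> borel_measurable borel" and g_sq: "integrable lborel (\<lambda>x. (g x)\<^sup>2)"
    and G: "plancherel_FT g G"
  shows "iFT (\<lambda>u. G u * inverse (phi \<Delta> \<gamma> lam \<nu> (- u)) * FT f u) x
       = conv_inv_meas (\<lambda>y. complex_of_real (fconv g f y)) \<Delta> \<gamma> lam \<nu> x"
proof -
  define \<psi> where "\<psi> = (\<lambda>u. inverse (phi \<Delta> \<gamma> lam \<nu> (- u)) * FT f u)"
  have iFT_\<psi>: "iFT \<psi> x = conv_inv_meas (\<lambda>y. complex_of_real (f y)) \<Delta> \<gamma> lam \<nu> x" for x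
    unfolding \<psi>_def by (rule iFT_inverse_phi_mult_FT[OF \<nu> cont int int_FT])
  note inverse_phi = borel_measurable_inverse_phi_uminus[OF \<nu>(1,2)] norm_inverse_phi_uminus_le[OF \<nu>]
  have f_meas: "f \<in> borel_measurable borel"
    using cont by (rule borel_measurable_continuous_onI)
  have int_\<psi>: "integrable lborel \<psi>" and \<psi>_sq: "integrable lborel (\<lambda>u. (cmod (\<psi> u))\<^sup>2)"
    unfolding \<psi>_def using f_meas
    by (intro integrable_bounded_mult_FT[OF inverse_phi _ int_FT]
        square_integrable_bounded_mult_FT[OF inverse_phi _ int_FT]; simp)+
  note conv = integrable_mult_conv_inv_meas[OF \<nu> cont int int_FT f_sq g g_sq]
    integral_mult_conv_inv_meas[OF \<nu> cont int int_FT f_sq g g_sq]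
  have "iFT (\<lambda>u. G u * \<psi> u) x = (\<integral>y. complex_of_real (g y) * iFT \<psi> (x - y) \<partial>lborel)"
    by (rule iFT_plancherel_mult[OF g g_sq G int_\<psi> \<psi>_sq]) (simp add: iFT_\<psi> conv(1))
  also have "\<dots> = conv_inv_meas (\<lambda>y. complex_of_real (fconv g f y)) \<Delta> \<gamma> lam \<nu> x"
    unfolding iFT_\<psi> by (rule conv(2))
  finally show ?thesis
    by (simp add: \<psi>_def mult.assoc)
qed

section \<open>Rescaled kernels\<close>

lemma continuous_on_Kh:
  assumes "continuous_on UNIV K"
  shows "continuous_on UNIV (Kh K h)"
proof -
  have "continuous_on UNIV (\<lambda>x. K (x * inverse h) * inverse h)"
    by (intro continuous_on_mult_right continuous_on_compose2[OF assms] continuous_intros) auto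
  then show ?thesis by (simp add: Kh_def divide_inverse)
qed

lemma integrable_Kh:
  fixes K :: "real \<Rightarrow> real"
  assumes "h \<noteq> 0" and "integrable lborel K"
  shows "integrable lborel (Kh K h)"
proof -
  have "integrable lborel (\<lambda>x. K (0 + (1 / h) * x) / h)"
    using assms by (intro integrable_divide lborel_integrable_real_affine) auto
  then show ?thesis by (simp add: Kh_def[abs_def])
qed

lemma square_integrable_Kh:
  fixes K :: "real \<Rightarrow> real"
  assumes "h \<noteq> 0" and "integrable lborel (\<lambda>x. (K x)\<^sup>2)"
  shows "integrable lborel (\<lambda>x. (Kh K h x)\<^sup>2)"
  using lborel_integrable_real_affine[OF assms(2), of "1 / h" 0] assms(1)
  by (simp add: Kh_def power_divide)

lemma FT_Kh:
  assumes "h > 0"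
  shows "FT (Kh K h) u = FT K (h * u)"
proof -
  have "FT (Kh K h) u = \<bar>h\<bar> *\<^sub>R (\<integral>s. iexp (u * (0 + h * s)) * complex_of_real (Kh K h (0 + h * s)) \<partial>lborel)"
    unfolding FT_def using assms by (intro lborel_integral_real_affine) auto
  then show ?thesis
    unfolding FT_def Kh_def using assms by (simp add: scaleR_conv_of_real mult_ac)
qed

lemma integrable_FT_Kh:
  assumes "h > 0" and "integrable lborel (FT K)"
  shows "integrable lborel (FT (Kh K h))"
proof -
  have "integrable lborel (\<lambda>u. FT K (0 + h * u))"
    using assms by (intro lborel_integrable_real_affine) auto
  moreover have "FT (Kh K h) = (\<lambda>u. FT K (0 + h * u))"
    using FT_Kh[OF assms(1)] by auto
  ultimately show ?thesis by simp
qed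

theorem lemma3p3:
  fixes \<Delta> \<gamma> lam h :: real and \<nu> :: "real measure" and K g :: "real \<Rightarrow> real"
    and G :: "real \<Rightarrow> complex"
  assumes "\<Delta> > 0" and "lam > 0"
    and "finite_measure \<nu>" and "sets \<nu> = sets borel" and "measure \<nu> UNIV = lam"
    and "integrable lborel K" and "integrable lborel (FT K)" and "continuous_on UNIV K"
    and "h > 0"
  shows "(\<forall>x. iFT (\<lambda>u. inverse (phi \<Delta> \<gamma> lam \<nu> (- u)) * FT (Kh K h) u) x
              = conv_inv_meas (\<lambda>y. complex_of_real (Kh K h y)) \<Delta> \<gamma> lam \<nu> x)
       \<and> ((K \<in> borel_measurable borel \<and> integrable lborel (\<lambda>x. (K x)\<^sup>2)
            \<and> g \<in> borel_measurable borel \<and> integrable lborel (\<lambda>x. (g x)\<^sup>2)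
            \<and> plancherel_FT g G)
          \<longrightarrow> (\<forall>x. iFT (\<lambda>u. G u * inverse (phi \<Delta> \<gamma> lam \<nu> (- u)) * FT (Kh K h) u) x
                 = conv_inv_meas (\<lambda>y. complex_of_real (fconv g (Kh K h) y)) \<Delta> \<gamma> lam \<nu> x))"
proof -
  note \<nu> = assms(3-5)
  have cont: "continuous_on UNIV (Kh K h)" and int: "integrable lborel (Kh K h)"
    and int_FT: "integrable lborel (FT (Kh K h))"
    using assms(6-9) by (simp_all add: continuous_on_Kh integrable_Kh integrable_FT_Kh)
  show ?thesis
  proof (intro conjI impI allI)
    show "iFT (\<lambda>u. inverse (phi \<Delta> \<gamma> lam \<nu> (- u)) * FT (Kh K h) u) x
        = conv_inv_meas (\<lambda>y. complex_of_real (Kh K h y)) \<Delta> \<gamma> lam \<nu> x" for x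
      by (rule iFT_inverse_phi_mult_FT[OF \<nu> cont int int_FT])
    show "iFT (\<lambda>u. G u * inverse (phi \<Delta> \<gamma> lam \<nu> (- u)) * FT (Kh K h) u) x
        = conv_inv_meas (\<lambda>y. complex_of_real (fconv g (Kh K h) y)) \<Delta> \<gamma> lam \<nu> x"
      if "K \<in> borel_measurable borel \<and> integrable lborel (\<lambda>x. (K x)\<^sup>2)
        \<and> g \<in> borel_measurable borel \<and> integrable lborel (\<lambda>x. (g x)\<^sup>2) \<and> plancherel_FT g G" for x
      using that assms(9)
      by (intro iFT_plancherel_inverse_phi_mult_FT[OF \<nu> cont int int_FT]) (auto simp: square_integrable_Kh)
  qed
qed

end
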